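(* Let $m,n\ge0$. (a) For $I\subseteq[m-1]$ and $J\subseteq[n-1]$, $\mathrm{ch}_\nu(\mathbf m(\dot\chi^I(\nu),\dot\chi^J(\nu)))=L_{\mathrm{comp}(I)}L_{\mathrm{comp}(J)}$. (b) For $I\subseteq[n-1]$, $(\mathrm{ch}_\nu\otimes\mathrm{ch}_\nu)(\blacktriangle(\dot\chi^I(\nu)))=\triangle(L_{\mathrm{comp}(I)})$, where $\triangle$ is the coproduct of $\mathsf{QSym}$.
   Context: Fix an integer $\nu>1$; $C_\nu$ is the additive cyclic group of order $\nu$. $[a,b]=\{t\in\mathbb Z:a\le t\le b\}$ (empty if $a>b$), $[n]=[1,n]$. $Q_S(\nu)=\bigoplus_{s\in S}C_\nu$ for finite $S\subset\mathbb Z_{>0}$; $Q_n(\nu)=Q_{[n-1]}(\nu)$ (trivial for $n\le1$). $\psi_\nu(0)=1$, $\psi_\nu(g)=-1/(\nu-1)$ for $g\neq0$. For $I\subseteq[n-1]$, $\dot\chi^I(\nu)(\mathbf g)=\prod_{i\in[n-1]\setminus I}\psi_\nu(g_i)$; $\mathrm{scf}(\mathcal N_n(\nu))$ is the space of functions on $Q_n(\nu)$ whose value depends only on $\{i:g_i\ne0\}$, with basis $\{\dot\chi^I(\nu)\}$ ($\cong\mathbb C$ for $n\le1$). Compositions: a composition of $n$ is a tuple of positive integers summing to $n$; for $n\ge1$, $\mathrm{comp}(\{s_1<\dots<s_i\})=(s_1,s_2-s_1,\dots,n-s_i)$ is a bijection from subsets of $[n-1]$ to compositions of $n$, and for $n=0$,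 $\mathrm{comp}(\emptyset)$ is the empty composition. $\mathsf{QSym}$ has basis $M_\alpha=\sum_{j_1<\dots<j_l}x_{j_1}^{\alpha_1}\cdots x_{j_l}^{\alpha_l}$, coproduct $\triangle M_\alpha=\sum_{\beta\cdot\gamma=\alpha}M_\beta\otimes M_\gamma$ (concatenation); fundamental functions $L_{\mathrm{comp}(I)}=\sum_{I\subseteq J\subseteq[n-1]}M_{\mathrm{comp}(J)}$ ($L$ of the empty composition is $1$). $\mathrm{ch}_\nu:\bigoplus_{n\ge0}\mathrm{scf}(\mathcal N_n(\nu))\to\mathsf{QSym}$ is the linear map $\dot\chi^I(\nu)\mapsto L_{\mathrm{comp}(I)}$. Connectivity: for $A\subseteq[N]$, $\mathrm{conn}(A)$ = maximal subsets of consecutive integers of $A$; $A^c=[N]\setminus A$; $c_1(A)=\{\max B:B\in\mathrm{conn}(A)\}\setminus\{N\}$, $c_2(A)=\{\max B:B\in\mathrm{conn}(A^c)\}\setminus\{N\}$, $c(A)=c_1(A)\cup c_2(A)$. Product: for $A\subseteq[m+n]$, $|A|=n$, $A=\{b_1<\dots<b_n\}$, $[m+n]\setminus A=\{a_1<\dots<a_m\}$ ($N=m+n$), functions $\phi$ on $Q_m(\nu)$, $\psi$ on $Q_n(\nu)$: if $m=0$ or $n=0$, $\mathbf m_A(\phi,\psi)=\phi\psi$; otherwise $\mathbf m_A(\phi,\psi)(\mathbf g)=\prod_{i\in c_2(A)}\psi_\nu(g_i)\cdot s_A(\phi,\psi)(\mathbf g')$ with $s_A(\phi,\psi)(\mathbf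 h)=\phi(h_{a_1},\dots,h_{a_{m-1}})\psi_\nu(h_{a_m})\psi(h_{b_1},\dots,h_{b_{n-1}})\psi_\nu(h_{b_n})$ on $Q_{[m+n]}(\nu)$ and $\mathbf g'$ equal to $\mathbf g$ on $[m+n-1]\setminus c(A)$ and $0$ on $c(A)\cup\{m+n\}$. $\mathbf m=\sum_{A}\mathbf m_A$ over all $n$-subsets $A$ of $[m+n]$, extended bilinearly. Coproduct: for $\phi$ on $Q_n(\nu)$, $\blacktriangle_0(\phi)=1\otimes\phi$, $\blacktriangle_n(\phi)=\phi\otimes1$, and for $1\le k\le n-1$, $\blacktriangle_k(\phi)\in\mathrm{Fun}(Q_k(\nu))\otimes\mathrm{Fun}(Q_{n-k}(\nu))$ corresponds to $(\mathbf a,\mathbf b)\mapsto\phi(a_1,\dots,a_{k-1},0,b_1,\dots,b_{n-k-1})$; $\blacktriangle=\sum_{k=0}^n\blacktriangle_k$, extended linearly. *)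

theory Defs
  imports Complex_Main
begin

(* Elements of C_nu are represented by naturals 0..<nu (0 = identity).
   Elements of Q_S(nu) are functions g :: nat => nat with g i < nu on S and g i = 0 off S. *)
definition QS :: "nat \<Rightarrow> nat set \<Rightarrow> (nat \<Rightarrow> nat) set" where
  "QS \<nu> S = {g. (\<forall>i\<in>S. g i < \<nu>) \<and> (\<forall>i. i \<notin> S \<longrightarrow> g i = 0)}"

definition Qn :: "nat \<Rightarrow> nat \<Rightarrow> (nat \<Rightarrow> nat) set" where
  "Qn \<nu> n = QS \<nu> {1..<n}"

definition psi :: "nat \<Rightarrow> nat \<Rightarrow> complex" where
  "psi \<nu> x = (if x = 0 then 1 else - 1 / (of_nat \<nu> - 1))"

definition chi :: "nat \<Rightarrow> nat \<Rightarrow> nat set \<Rightarrow> (nat \<Rightarrow> nat) \<Rightarrow> complex" where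
  "chi \<nu> n I g = (\<Prod>i\<in>{1..<n} - I. psi \<nu> (g i))"

definition comp :: "nat \<Rightarrow> nat set \<Rightarrow> nat list" where
  "comp n S = (if n = 0 then [] else
     (let s = sorted_list_of_set S in map2 (-) (s @ [n]) (0 # s)))"

definition is_comp :: "nat list \<Rightarrow> bool" where
  "is_comp \<alpha> = (\<forall>x\<in>set \<alpha>. 0 < x)"

(* QSym realised inside formal power series in x_0, x_1, ...:
   a series is its coefficient function on exponent vectors (monomials). *)
definition M :: "nat list \<Rightarrow> (nat \<Rightarrow> nat) \<Rightarrow> complex" where
  "M \<alpha> e = (if \<exists>j::nat \<Rightarrow> nat. (\<forall>k l. k < l \<and> l < length \<alpha> \<longrightarrow> j k < j l) \<and>
                  e = (\<lambda>i. \<Sum>k<length \<alpha>. if j k = i then \<alpha> ! k else 0)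
             then 1 else 0)"

(* L_{comp(I)} for I a subset of [n-1] *)
definition Lfun :: "nat \<Rightarrow> nat set \<Rightarrow> (nat \<Rightarrow> nat) \<Rightarrow> complex" where
  "Lfun n I = (\<lambda>e. \<Sum>J\<in>{J. I \<subseteq> J \<and> J \<subseteq> {1..<n}}. M (comp n J) e)"

definition qmult :: "((nat \<Rightarrow> nat) \<Rightarrow> complex) \<Rightarrow> ((nat \<Rightarrow> nat) \<Rightarrow> complex) \<Rightarrow> (nat \<Rightarrow> nat) \<Rightarrow> complex" where
  "qmult f g e = (\<Sum>e1\<in>{e1. \<forall>i. e1 i \<le> e i}. f e1 * g (\<lambda>i. e i - e1 i))"

(* QSym (x) QSym realised as series in two variable sets x, y *)
definition tens :: "((nat \<Rightarrow> nat) \<Rightarrow> complex) \<Rightarrow> ((nat \<Rightarrow> nat) \<Rightarrow> complex) \<Rightarrow> (nat \<Rightarrow> nat) \<times> (nat \<Rightarrow> nat) \<Rightarrow> complex" where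
  "tens f g = (\<lambda>(e1, e2). f e1 * g e2)"

definition coprodM :: "nat list \<Rightarrow> (nat \<Rightarrow> nat) \<times> (nat \<Rightarrow> nat) \<Rightarrow> complex" where
  "coprodM \<alpha> = (\<lambda>p. \<Sum>k\<le>length \<alpha>. tens (M (take k \<alpha>)) (M (drop k \<alpha>)) p)"

definition qcoprod :: "((nat \<Rightarrow> nat) \<Rightarrow> complex) \<Rightarrow> (nat \<Rightarrow> nat) \<times> (nat \<Rightarrow> nat) \<Rightarrow> complex" where
  "qcoprod f = (THE t. \<exists>A c. finite A \<and> (\<forall>\<alpha>\<in>A. is_comp \<alpha>) \<and>
      f = (\<lambda>e. \<Sum>\<alpha>\<in>A. c \<alpha> * M \<alpha> e) \<and> t = (\<lambda>p. \<Sum>\<alpha>\<in>A. c \<alpha> * coprodM \<alpha> p))"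

definition ch :: "nat \<Rightarrow> nat \<Rightarrow> ((nat \<Rightarrow> nat) \<Rightarrow> complex) \<Rightarrow> (nat \<Rightarrow> nat) \<Rightarrow> complex" where
  "ch \<nu> n f = (THE q. \<exists>c. (\<forall>g\<in>Qn \<nu> n. f g = (\<Sum>I\<in>Pow {1..<n}. c I * chi \<nu> n I g)) \<and>
      q = (\<lambda>e. \<Sum>I\<in>Pow {1..<n}. c I * Lfun n I e))"

(* ch_nu (x) ch_nu on scf(N_k) (x) scf(N_l), functions on Q_k x Q_l *)
definition ch2 :: "nat \<Rightarrow> nat \<Rightarrow> nat \<Rightarrow> ((nat \<Rightarrow> nat) \<Rightarrow> (nat \<Rightarrow> nat) \<Rightarrow> complex) \<Rightarrow> (nat \<Rightarrow> nat) \<times> (nat \<Rightarrow> nat) \<Rightarrow> complex" where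
  "ch2 \<nu> k l F = (THE t. \<exists>c. (\<forall>a\<in>Qn \<nu> k. \<forall>b\<in>Qn \<nu> l.
        F a b = (\<Sum>I\<in>Pow {1..<k}. \<Sum>J\<in>Pow {1..<l}. c I J * (chi \<nu> k I a * chi \<nu> l J b))) \<and>
      t = (\<lambda>p. \<Sum>I\<in>Pow {1..<k}. \<Sum>J\<in>Pow {1..<l}. c I J * tens (Lfun k I) (Lfun l J) p))"

definition consec :: "nat set \<Rightarrow> bool" where
  "consec B = (\<exists>a b. a \<le> b \<and> B = {a..b})"

definition conn :: "nat set \<Rightarrow> nat set set" where
  "conn A = {B. B \<subseteq> A \<and> consec B \<and> (\<forall>C. C \<subseteq> A \<and> consec C \<and> B \<subseteq> C \<longrightarrow> C = B)}"

definition c1 :: "nat \<Rightarrow> nat set \<Rightarrow> nat set" where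
  "c1 N A = (Max ` conn A) - {N}"

definition c2 :: "nat \<Rightarrow> nat set \<Rightarrow> nat set" where
  "c2 N A = (Max ` conn ({1..N} - A)) - {N}"

definition cc :: "nat \<Rightarrow> nat set \<Rightarrow> nat set" where
  "cc N A = c1 N A \<union> c2 N A"

definition sA :: "nat \<Rightarrow> nat \<Rightarrow> nat \<Rightarrow> nat set \<Rightarrow> ((nat \<Rightarrow> nat) \<Rightarrow> complex) \<Rightarrow> ((nat \<Rightarrow> nat) \<Rightarrow> complex) \<Rightarrow> (nat \<Rightarrow> nat) \<Rightarrow> complex" where
  "sA \<nu> m n A \<phi> \<psi>' h =
    (let b = sorted_list_of_set A; a = sorted_list_of_set ({1..m+n} - A) in
      \<phi> (\<lambda>k. if k \<in> {1..<m} then h (a ! (k - 1)) else 0) * psi \<nu> (h (a ! (m - 1))) *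
      \<psi>' (\<lambda>k. if k \<in> {1..<n} then h (b ! (k - 1)) else 0) * psi \<nu> (h (b ! (n - 1))))"

definition mA :: "nat \<Rightarrow> nat \<Rightarrow> nat \<Rightarrow> nat set \<Rightarrow> ((nat \<Rightarrow> nat) \<Rightarrow> complex) \<Rightarrow> ((nat \<Rightarrow> nat) \<Rightarrow> complex) \<Rightarrow> (nat \<Rightarrow> nat) \<Rightarrow> complex" where
  "mA \<nu> m n A \<phi> \<psi>' g =
    (if m = 0 \<or> n = 0 then \<phi> (if m = 0 then (\<lambda>_. 0) else g) * \<psi>' (if n = 0 then (\<lambda>_. 0) else g)
     else (\<Prod>i\<in>c2 (m + n) A. psi \<nu> (g i)) *
          sA \<nu> m n A \<phi> \<psi>' (\<lambda>i. if i \<in> {1..<m + n} - cc (m + n) A then g i else 0))"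

definition mprod :: "nat \<Rightarrow> nat \<Rightarrow> nat \<Rightarrow> ((nat \<Rightarrow> nat) \<Rightarrow> complex) \<Rightarrow> ((nat \<Rightarrow> nat) \<Rightarrow> complex) \<Rightarrow> (nat \<Rightarrow> nat) \<Rightarrow> complex" where
  "mprod \<nu> m n \<phi> \<psi>' g = (\<Sum>A\<in>{A. A \<subseteq> {1..m + n} \<and> card A = n}. mA \<nu> m n A \<phi> \<psi>' g)"

definition cop :: "nat \<Rightarrow> nat \<Rightarrow> ((nat \<Rightarrow> nat) \<Rightarrow> complex) \<Rightarrow> (nat \<Rightarrow> nat) \<Rightarrow> (nat \<Rightarrow> nat) \<Rightarrow> complex" where
  "cop n k \<phi> = (if k = 0 then (\<lambda>a b. \<phi> b) else if k = n then (\<lambda>a b. \<phi> a)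
     else (\<lambda>a b. \<phi> (\<lambda>i. if i < k then a i else if i = k then 0 else b (i - k))))"

end

(*
  Both ch and ch (x) ch are read off from expansions in the functions chi^I, which are linearly
  independent: evaluated at 0/1-vectors they form a tensor power of an invertible 2x2 matrix.

  (a) m_A(chi^I, chi^J) is the single function chi^K with K = K(A, I, J) the set of positions at
  which a shuffle, taking the second word at the positions A, must strictly ascend. So (a) is the
  shuffle rule L_I L_J = sum_A L_K(A,I,J), proved coefficientwise: the monomial x^e occurs in L_K
  iff the unique monotone word h with content e strictly ascends at K, and splitting h along A is
  a bijection from the admissible A onto the decompositions e = e1 + e2 with x^e1 in L_I and x^e2
  in L_J.

  (b) The k-th component of the coproduct of chi^I is chi^(I below k) (x) chi^(I above k, shifted
  down by k), while x^e1 y^e2 occurs in the coproduct of L_I iff the concatenation of the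
  flattenings of e1 and e2 is a composition of n whose partial sums contain I; such a composition
  splits uniquely at k = |e1|.
*)
theory Submission
  imports Defs
begin

section \<open>Ranks in finite sets of naturals\<close>

definition rank_in :: "nat set \<Rightarrow> nat \<Rightarrow> nat" where
  "rank_in X s = card {t\<in>X. t \<le> s}"

text \<open>The \<open>k\<close>-th smallest element, counted from \<open>1\<close> as in the definition of \<^const>\<open>sA\<close>.\<close>

definition kth_elem :: "nat set \<Rightarrow> nat \<Rightarrow> nat" where
  "kth_elem X k = sorted_list_of_set X ! (k - 1)"

lemma sorted_list_of_set_nth_less_iff:
  assumes "finite X" "i < card X" "j < card X"
  shows "sorted_list_of_set X ! i < sorted_list_of_set X ! j \<longleftrightarrow> i < j"
proof -
  let ?S = "sorted_list_of_set X"
  have less: "?S ! i < ?S ! j" if "i < j" "j < card X" for i j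
    using sorted_wrt_nth_less[OF sorted_list_of_set.strict_sorted_key_list_of_set[of X]] that
    by simp
  show ?thesis
    using less[of i j] less[of j i] assms by (cases i j rule: linorder_cases) auto
qed

lemma sorted_list_of_set_nth_le_iff:
  assumes "finite X" "i < card X" "j < card X"
  shows "sorted_list_of_set X ! i \<le> sorted_list_of_set X ! j \<longleftrightarrow> i \<le> j"
  using sorted_list_of_set_nth_less_iff[OF assms(1,3,2)] by (simp add: not_less[symmetric])

lemma rank_in_strict_mono:
  assumes "finite X" "s \<in> X" "t \<in> X" "s < t"
  shows "rank_in X s < rank_in X t"
  unfolding rank_in_def
proof (rule psubset_card_mono)
  have "{u\<in>X. u \<le> s} \<subseteq> {u\<in>X. u \<le> t}" "t \<in> {u\<in>X. u \<le> t} - {u\<in>X. u \<le> s}"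
    using assms by auto
  then show "{u\<in>X. u \<le> s} \<subset> {u\<in>X. u \<le> t}" by blast
qed (use assms in auto)

lemma rank_in_le_card: "finite X \<Longrightarrow> rank_in X s \<le> card X"
  unfolding rank_in_def by (rule card_mono) auto

lemma rank_in_pos: "finite X \<Longrightarrow> s \<in> X \<Longrightarrow> 1 \<le> rank_in X s"
  unfolding rank_in_def using card_gt_0_iff[of "{t\<in>X. t \<le> s}"] by force

lemma rank_in_Suc:
  assumes "finite X"
  shows "rank_in X (Suc s) = rank_in X s + (if Suc s \<in> X then 1 else 0)"
proof (cases "Suc s \<in> X")
  case True
  then have "{t\<in>X. t \<le> Suc s} = insert (Suc s) {t\<in>X. t \<le> s}" by auto
  then show ?thesis unfolding rank_in_def using True by simp
next
  case False
  then have "{t\<in>X. t \<le> Suc s} = {t\<in>X. t \<le> s}" using le_Suc_eq by auto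
  then show ?thesis unfolding rank_in_def using False by simp
qed

lemma rank_in_atLeastAtMost:
  assumes "s \<le> N"
  shows "rank_in {1..N} s = s"
proof -
  have "{t\<in>{1..N}. t \<le> s} = {1..s}" using assms by auto
  then show ?thesis unfolding rank_in_def by simp
qed

lemma kth_elem_in:
  assumes "finite X" "1 \<le> k" "k \<le> card X"
  shows "kth_elem X k \<in> X"
  unfolding kth_elem_def using assms nth_mem[of "k - 1" "sorted_list_of_set X"] by simp

lemma rank_in_kth_elem:
  assumes "finite X" "1 \<le> k" "k \<le> card X"
  shows "rank_in X (kth_elem X k) = k"
proof -
  let ?S = "sorted_list_of_set X"
  have "{t\<in>X. t \<le> ?S ! (k - 1)} = (\<lambda>i. ?S ! i) ` {..k - 1}"
  proof (rule set_eqI, rule iffI)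
    fix t assume t: "t \<in> {t\<in>X. t \<le> ?S ! (k - 1)}"
    then obtain i where "i < card X" "t = ?S ! i"
      using assms(1) by (metis (no_types, lifting) in_set_conv_nth length_sorted_list_of_set
          mem_Collect_eq set_sorted_list_of_set)
    then show "t \<in> (\<lambda>i. ?S ! i) ` {..k - 1}"
      using t assms sorted_list_of_set_nth_le_iff[OF assms(1), of i "k - 1"] by auto
  next
    fix t assume "t \<in> (\<lambda>i. ?S ! i) ` {..k - 1}"
    then obtain i where "i \<le> k - 1" "t = ?S ! i" by auto
    then show "t \<in> {t\<in>X. t \<le> ?S ! (k - 1)}"
      using assms sorted_list_of_set_nth_le_iff[OF assms(1), of i "k - 1"]
        nth_mem[of i ?S] by auto
  qed
  moreover have "inj_on (\<lambda>i. ?S ! i) {..k - 1}"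
    using assms by (intro inj_onI) (simp add: nth_eq_iff_index_eq)
  ultimately show ?thesis
    unfolding rank_in_def kth_elem_def using assms by (simp add: card_image)
qed

lemma kth_elem_rank_in:
  assumes "finite X" "s \<in> X"
  shows "kth_elem X (rank_in X s) = s"
proof -
  let ?r = "rank_in X s"
  have r: "1 \<le> ?r" "?r \<le> card X"
    using rank_in_pos[OF assms] rank_in_le_card[OF assms(1)] by auto
  have "kth_elem X ?r \<in> X" "rank_in X (kth_elem X ?r) = ?r"
    using kth_elem_in[OF assms(1) r] rank_in_kth_elem[OF assms(1) r] by auto
  then show ?thesis
    using rank_in_strict_mono[OF assms(1)] assms by (metis less_irrefl linorder_neq_iff)
qed

lemma kth_elem_strict_mono:
  assumes "finite X" "1 \<le> k" "k < l" "l \<le> card X"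
  shows "kth_elem X k < kth_elem X l"
  unfolding kth_elem_def using assms sorted_list_of_set_nth_less_iff[OF assms(1), of "k - 1" "l - 1"]
  by simp

lemma inj_on_kth_elem: "finite X \<Longrightarrow> inj_on (kth_elem X) {1..card X}"
proof (rule inj_onI)
  fix k l assume "finite X" "k \<in> {1..card X}" "l \<in> {1..card X}" "kth_elem X k = kth_elem X l"
  then show "k = l"
    using kth_elem_strict_mono[of X k l] kth_elem_strict_mono[of X l k]
    by (cases k l rule: linorder_cases) auto
qed

lemma kth_elem_image: "finite X \<Longrightarrow> kth_elem X ` {1..card X} = X"
proof (rule set_eqI, rule iffI)
  fix s assume "finite X" "s \<in> X"
  then show "s \<in> kth_elem X ` {1..card X}"
    using kth_elem_rank_in rank_in_pos rank_in_le_card by (metis atLeastAtMost_iff image_eqI)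
qed (auto intro: kth_elem_in)

lemma kth_elem_Suc_rank_in:
  "finite X \<Longrightarrow> s \<in> X \<Longrightarrow> Suc s \<in> X \<Longrightarrow> kth_elem X (Suc (rank_in X s)) = Suc s"
  using rank_in_Suc[of X s] kth_elem_rank_in[of X "Suc s"] by simp

lemma not_in_between_kth_elem:
  assumes "finite X" "1 \<le> k" "k < card X" "kth_elem X k < t" "t < kth_elem X (Suc k)"
  shows "t \<notin> X"
proof
  assume "t \<in> X"
  have "rank_in X (kth_elem X k) < rank_in X t"
    using rank_in_strict_mono[OF assms(1) kth_elem_in[OF assms(1)] \<open>t \<in> X\<close> assms(4)] assms by simp
  moreover have "rank_in X t < rank_in X (kth_elem X (Suc k))"
    using rank_in_strict_mono[OF assms(1) \<open>t \<in> X\<close> kth_elem_in[OF assms(1)] assms(5)] assms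
    by simp
  ultimately show False
    using rank_in_kth_elem[OF assms(1)] assms by simp
qed

lemma Suc_notin_if_rank_in_eq_card:
  assumes "finite X" "s \<in> X" "rank_in X s = card X"
  shows "Suc s \<notin> X"
  using rank_in_Suc[OF assms(1), of s] rank_in_le_card[OF assms(1), of "Suc s"] assms by auto

section \<open>Monotone words and their content\<close>

definition psum :: "(nat \<Rightarrow> nat) \<Rightarrow> nat \<Rightarrow> nat" where
  "psum e i = (\<Sum>j<i. e j)"

definition supported_below :: "(nat \<Rightarrow> nat) \<Rightarrow> nat \<Rightarrow> bool" where
  "supported_below e B \<longleftrightarrow> (\<forall>j\<ge>B. e j = 0)"

definition word_content :: "nat set \<Rightarrow> (nat \<Rightarrow> nat) \<Rightarrow> nat \<Rightarrow> nat" where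
  "word_content X f i = card {s\<in>X. f s = i}"

lemma psum_0 [simp]: "psum e 0 = 0"
  by (simp add: psum_def)

lemma psum_Suc: "psum e (Suc i) = psum e i + e i"
  by (simp add: psum_def)

lemma psum_mono: "i \<le> j \<Longrightarrow> psum e i \<le> psum e j"
  unfolding psum_def by (rule sum_mono2) auto

lemma psum_add: "psum (\<lambda>i. a i + b i) j = psum a j + psum b j"
  unfolding psum_def by (simp add: sum.distrib)

lemma psum_eq_if_supported_below: "supported_below e B \<Longrightarrow> B \<le> j \<Longrightarrow> psum e j = psum e B"
  by (induction j) (auto simp: psum_Suc supported_below_def le_Suc_eq)

lemma psum_le_if_supported_below: "supported_below e B \<Longrightarrow> psum e j \<le> psum e B"
  by (metis psum_eq_if_supported_below psum_mono nle_le)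

lemma card_less_eq_psum_word_content:
  "finite X \<Longrightarrow> card {s\<in>X. f s < i} = psum (word_content X f) i"
proof (induction i)
  case (Suc i)
  have "{s\<in>X. f s < Suc i} = {s\<in>X. f s < i} \<union> {s\<in>X. f s = i}" by auto
  then show ?case
    using Suc by (simp add: card_Un_disjoint disjoint_iff psum_Suc word_content_def)
qed simp

lemma initial_segment_eq:
  assumes "D \<subseteq> {1..m}" "\<And>s t. s \<in> D \<Longrightarrow> 1 \<le> t \<Longrightarrow> t \<le> s \<Longrightarrow> t \<in> D"
  shows "D = {1..card D}"
proof (cases "D = {}")
  case False
  have fin: "finite D" using assms(1) finite_subset by blast
  have "D = {1..Max D}"
  proof
    show "D \<subseteq> {1..Max D}" using assms(1) Max_ge[OF fin] by auto
    show "{1..Max D} \<subseteq> D" using assms(2)[OF Max_in[OF fin False]] by auto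
  qed
  then show ?thesis by (metis card_atLeastAtMost diff_Suc_1)
qed simp

lemma sublevel_set_mono_word:
  assumes "mono_on {1..m} f"
  shows "{s\<in>{1..m}. f s < i} = {1..psum (word_content {1..m} f) i}"
proof -
  have "{s\<in>{1..m}. f s < i} = {1..card {s\<in>{1..m}. f s < i}}"
  proof (rule initial_segment_eq)
    fix s t assume "s \<in> {s\<in>{1..m}. f s < i}" "1 \<le> t" "t \<le> s"
    then show "t \<in> {s\<in>{1..m}. f s < i}"
      using mono_onD[OF assms, of t s] by auto
  qed auto
  then show ?thesis using card_less_eq_psum_word_content[of "{1..m}" f i] by simp
qed

lemma mono_word_eq_iff:
  assumes "mono_on {1..m} f" "1 \<le> s" "s \<le> m"
  shows "f s = i \<longleftrightarrow> psum (word_content {1..m} f) i < s \<and> s \<le> psum (word_content {1..m} f) (Suc i)"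
proof -
  let ?p = "psum (word_content {1..m} f)"
  have "f s < i \<longleftrightarrow> s \<le> ?p i" "f s < Suc i \<longleftrightarrow> s \<le> ?p (Suc i)"
    using sublevel_set_mono_word[OF assms(1), of i] sublevel_set_mono_word[OF assms(1), of "Suc i"]
      assms by (auto simp: set_eq_iff)
  then show ?thesis by auto
qed

lemma mono_words_eq:
  assumes "mono_on {1..m} f" "mono_on {1..m} g" "word_content {1..m} f = word_content {1..m} g"
    and "1 \<le> s" "s \<le> m"
  shows "f s = g s"
proof -
  have "psum (word_content {1..m} g) (f s) < s \<and> s \<le> psum (word_content {1..m} g) (Suc (f s))"
    using mono_word_eq_iff[OF assms(1) assms(4,5), of "f s"] assms(3) by simp
  then show ?thesis
    using mono_word_eq_iff[OF assms(2) assms(4,5), of "f s"] by (metis (full_types))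
qed

lemma mono_word_ascent_iff:
  assumes "mono_on {1..m} f" "1 \<le> k" "k < m"
  shows "f k < f (Suc k) \<longleftrightarrow> k \<in> range (psum (word_content {1..m} f))"
proof
  let ?p = "psum (word_content {1..m} f) (f (Suc k))"
  assume "f k < f (Suc k)"
  then have "k \<in> {s\<in>{1..m}. f s < f (Suc k)}" "Suc k \<notin> {s\<in>{1..m}. f s < f (Suc k)}"
    using assms by auto
  then have "k \<le> ?p" "\<not> Suc k \<le> ?p"
    unfolding sublevel_set_mono_word[OF assms(1)] by auto
  then have "?p = k" by simp
  then show "k \<in> range (psum (word_content {1..m} f))" by (metis rangeI)
next
  assume "k \<in> range (psum (word_content {1..m} f))"
  then obtain i where "psum (word_content {1..m} f) i = k" by auto
  then have sub: "{s\<in>{1..m}. f s < i} = {1..k}" using sublevel_set_mono_word[OF assms(1), of i] by simp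
  have "k \<in> {s\<in>{1..m}. f s < i}" "Suc k \<notin> {s\<in>{1..m}. f s < i}"
    unfolding sub using assms by auto
  then have "f k < i" "\<not> f (Suc k) < i" using assms by auto
  then show "f k < f (Suc k)" by simp
qed

lemma word_content_total:
  obtains B where "supported_below (word_content {1..m} f) B" "psum (word_content {1..m} f) B = m"
proof -
  define B where "B = Suc (sum f {1..m})"
  have less: "f s < B" if "s \<in> {1..m}" for s
    unfolding B_def using that by (simp add: le_imp_less_Suc member_le_sum)
  then have "supported_below (word_content {1..m} f) B"
    unfolding supported_below_def word_content_def by (fastforce intro: card_eq_0_iff[THEN iffD2])
  moreover have "{s\<in>{1..m}. f s < B} = {1..m}" using less by auto
  then have "psum (word_content {1..m} f) B = m"
    using card_less_eq_psum_word_content[of "{1..m}" f B] by simp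
  ultimately show thesis using that by blast
qed

definition mono_word_of :: "(nat \<Rightarrow> nat) \<Rightarrow> nat \<Rightarrow> nat" where
  "mono_word_of e s = (LEAST i. s \<le> psum e (Suc i))"

lemma mono_word_of_eq_iff:
  assumes "supported_below e B" "psum e B = m" "s \<in> {1..m}"
  shows "mono_word_of e s = i \<longleftrightarrow> psum e i < s \<and> s \<le> psum e (Suc i)"
proof -
  have upper: "s \<le> psum e (Suc (mono_word_of e s))"
  proof -
    have "s \<le> psum e (Suc B)"
      using psum_eq_if_supported_below[OF assms(1), of "Suc B"] assms(2,3) by simp
    then show ?thesis unfolding mono_word_of_def by (rule LeastI)
  qed
  have least: "mono_word_of e s \<le> j" if "s \<le> psum e (Suc j)" for j
    unfolding mono_word_of_def using that by (rule Least_le)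
  show ?thesis
  proof
    assume w: "mono_word_of e s = i"
    show "psum e i < s \<and> s \<le> psum e (Suc i)"
    proof
      show "s \<le> psum e (Suc i)" using upper w by simp
      show "psum e i < s"
      proof (cases i)
        case (Suc j)
        then show ?thesis using least[of j] w by (auto simp: not_less[symmetric])
      qed (use assms(3) in simp)
    qed
  next
    assume s: "psum e i < s \<and> s \<le> psum e (Suc i)"
    have "\<not> mono_word_of e s < i"
    proof
      assume "mono_word_of e s < i"
      then have "psum e (Suc (mono_word_of e s)) \<le> psum e i" by (intro psum_mono) simp
      then show False using upper s by simp
    qed
    then show "mono_word_of e s = i" using least[of i] s by simp
  qed
qed

lemma mono_word_exists:
  assumes "supported_below e B" "psum e B = m"
  shows "\<exists>f. mono_on {1..m} f \<and> word_content {1..m} f = e"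
proof (intro exI conjI)
  note block = mono_word_of_eq_iff[OF assms]
  show "mono_on {1..m} (mono_word_of e)"
  proof (rule mono_onI)
    fix s t :: nat assume "s \<in> {1..m}" "t \<in> {1..m}" "s \<le> t"
    then show "mono_word_of e s \<le> mono_word_of e t"
      using block[of t "mono_word_of e t"] unfolding mono_word_of_def by (auto intro: Least_le)
  qed
  show "word_content {1..m} (mono_word_of e) = e"
  proof
    fix i
    have "psum e (Suc i) \<le> m"
      using psum_le_if_supported_below[OF assms(1)] assms(2) by simp
    then have "{s\<in>{1..m}. mono_word_of e s = i} = {psum e i<..psum e (Suc i)}"
      using block by (intro set_eqI iffI) auto
    then show "word_content {1..m} (mono_word_of e) i = e i"
      unfolding word_content_def by (simp add: psum_Suc)
  qed
qed

text \<open>\<open>L\<^bsub>comp(I)\<^esub>\<close> is the sum of the monomials \<open>x\<^sub>f\<^sub>1 \<cdots> x\<^sub>f\<^sub>m\<close> over the monotone words \<open>f\<close>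
  with strict ascents at \<open>I\<close>; such a word is determined by its content.\<close>

definition has_L_word :: "nat \<Rightarrow> nat set \<Rightarrow> (nat \<Rightarrow> nat) \<Rightarrow> bool" where
  "has_L_word m I e \<longleftrightarrow>
     (\<exists>f. mono_on {1..m} f \<and> word_content {1..m} f = e \<and> (\<forall>k\<in>I. f k < f (Suc k)))"

lemma has_L_word_iff_psum:
  assumes "I \<subseteq> {1..<m}"
  shows "has_L_word m I e \<longleftrightarrow> (\<exists>B. supported_below e B \<and> psum e B = m) \<and> I \<subseteq> range (psum e)"
proof
  assume "has_L_word m I e"
  then obtain f where f: "mono_on {1..m} f" "word_content {1..m} f = e" "\<forall>k\<in>I. f k < f (Suc k)"
    unfolding has_L_word_def by blast
  have "I \<subseteq> range (psum e)"
  proof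
    fix k assume "k \<in> I"
    then have "1 \<le> k" "k < m" "f k < f (Suc k)" using f(3) assms by auto
    then show "k \<in> range (psum e)"
      using mono_word_ascent_iff[OF f(1), of k] f(2) by simp
  qed
  moreover obtain B where "supported_below e B" "psum e B = m"
    using word_content_total[of m f] f(2) by blast
  ultimately show "(\<exists>B. supported_below e B \<and> psum e B = m) \<and> I \<subseteq> range (psum e)"
    by blast
next
  assume "(\<exists>B. supported_below e B \<and> psum e B = m) \<and> I \<subseteq> range (psum e)"
  then obtain B where "supported_below e B" "psum e B = m" and I: "I \<subseteq> range (psum e)" by blast
  then obtain f where f: "mono_on {1..m} f" "word_content {1..m} f = e"
    using mono_word_exists by blast
  have "\<forall>k\<in>I. f k < f (Suc k)"
  proof
    fix k assume "k \<in> I"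
    then have "1 \<le> k" "k < m" "k \<in> range (psum e)" using I assms by auto
    then show "f k < f (Suc k)"
      using mono_word_ascent_iff[OF f(1), of k] f(2) by simp
  qed
  then show "has_L_word m I e" unfolding has_L_word_def using f by blast
qed

section \<open>Compositions and the functions \<open>M\<^sub>\<alpha>\<close> and \<open>L\<^sub>\<alpha>\<close>\<close>

definition supp :: "(nat \<Rightarrow> nat) \<Rightarrow> nat set" where
  "supp e = {i. e i \<noteq> 0}"

definition flat :: "(nat \<Rightarrow> nat) \<Rightarrow> nat list" where
  "flat e = map e (sorted_list_of_set (supp e))"

definition partial_sums :: "nat list \<Rightarrow> nat set" where
  "partial_sums \<beta> = {sum_list (take c \<beta>) | c. c \<le> length \<beta>}"

lemma finite_supp_iff: "finite (supp e) \<longleftrightarrow> (\<exists>B. supported_below e B)"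
proof
  assume "finite (supp e)"
  then obtain B where B: "\<forall>i\<in>supp e. i < B" using finite_nat_set_iff_bounded by blast
  have "e j = 0" if "B \<le> j" for j
    using B that unfolding supp_def by (metis leD mem_Collect_eq)
  then have "supported_below e B" unfolding supported_below_def by blast
  then show "\<exists>B. supported_below e B" by blast
next
  assume "\<exists>B. supported_below e B"
  then obtain B where "supported_below e B" by blast
  then have "supp e \<subseteq> {..<B}"
    unfolding supported_below_def supp_def by (auto simp: not_less[symmetric])
  then show "finite (supp e)" using finite_subset by blast
qed

lemma length_flat: "length (flat e) = card (supp e)"
  by (simp add: flat_def)

lemma nth_flat: "k < card (supp e) \<Longrightarrow> flat e ! k = e (sorted_list_of_set (supp e) ! k)"
  by (simp add: flat_def)

lemma is_comp_flat: "is_comp (flat e)"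
proof (cases "finite (supp e)")
  case True
  then show ?thesis unfolding is_comp_def flat_def by (auto simp: supp_def)
qed (simp add: flat_def is_comp_def)

lemma is_comp_take: "is_comp \<alpha> \<Longrightarrow> is_comp (take j \<alpha>)"
  unfolding is_comp_def by (meson in_set_takeD)

lemma is_comp_drop: "is_comp \<alpha> \<Longrightarrow> is_comp (drop j \<alpha>)"
  unfolding is_comp_def by (meson in_set_dropD)

lemma is_comp_append: "is_comp \<alpha> \<Longrightarrow> is_comp \<beta> \<Longrightarrow> is_comp (\<alpha> @ \<beta>)"
  unfolding is_comp_def by auto

lemma filter_less_sorted_eq_take:
  "sorted xs \<Longrightarrow> filter (\<lambda>x. x < i) xs = take (length (filter (\<lambda>x. x < (i::nat)) xs)) xs"
proof (induction xs)
  case (Cons x xs)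
  show ?case
  proof (cases "x < i")
    case False
    then have "filter (\<lambda>x. x < i) xs = []"
      using Cons.prems by (auto simp: filter_empty_conv)
    then show ?thesis using False by simp
  qed (use Cons in simp)
qed simp

lemma psum_eq_sum_take_flat:
  assumes "finite (supp e)"
  shows "psum e i = sum_list (take (card {j\<in>supp e. j < i}) (flat e))"
proof -
  let ?S = "sorted_list_of_set (supp e)"
  let ?F = "filter (\<lambda>j. j < i) ?S"
  have card: "length ?F = card {j\<in>supp e. j < i}"
    using distinct_length_filter[of ?S] assms by (simp add: Int_commute Collect_conj_eq)
  have "psum e i = (\<Sum>j\<in>supp e \<inter> {..<i}. e j)"
    unfolding psum_def by (rule sum.mono_neutral_right) (auto simp: supp_def)
  also have "\<dots> = sum_list (map e ?F)"
    using assms by (subst sum_list_distinct_conv_sum_set) (auto intro!: sum.cong)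
  also have "map e ?F = take (card {j\<in>supp e. j < i}) (flat e)"
    using filter_less_sorted_eq_take[of ?S i] card by (simp add: flat_def take_map)
  finally show ?thesis .
qed

lemma psum_eq_sum_list_flat:
  assumes "finite (supp e)" "supported_below e B"
  shows "psum e B = sum_list (flat e)"
proof -
  have "{j\<in>supp e. j < B} = supp e"
    using assms(2) unfolding supported_below_def supp_def by (auto simp: not_less[symmetric])
  then show ?thesis using psum_eq_sum_take_flat[OF assms(1), of B] by (simp add: length_flat)
qed

lemma range_psum:
  assumes "finite (supp e)"
  shows "range (psum e) = partial_sums (flat e)"
proof (intro equalityI subsetI)
  fix x assume "x \<in> range (psum e)"
  moreover have "card {j\<in>supp e. j < i} \<le> length (flat e)" for i
    using assms by (simp add: length_flat card_mono)
  ultimately show "x \<in> partial_sums (flat e)"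
    unfolding partial_sums_def using psum_eq_sum_take_flat[OF assms] by blast
next
  fix x assume "x \<in> partial_sums (flat e)"
  then obtain c where c: "c \<le> card (supp e)" "x = sum_list (take c (flat e))"
    unfolding partial_sums_def length_flat by blast
  show "x \<in> range (psum e)"
  proof (cases c)
    case 0
    then show ?thesis using c by (metis psum_0 take0 sum_list.Nil rangeI)
  next
    case (Suc c')
    let ?s = "kth_elem (supp e) c"
    have "{j\<in>supp e. j < Suc ?s} = {j\<in>supp e. j \<le> ?s}" by auto
    then have "card {j\<in>supp e. j < Suc ?s} = c"
      using rank_in_kth_elem[OF assms, of c] c Suc unfolding rank_in_def by simp
    then show ?thesis using psum_eq_sum_take_flat[OF assms, of "Suc ?s"] c by (metis rangeI)
  qed
qed

lemma M_flat:
  assumes "finite (supp e)"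
  shows "M (flat e) e = 1"
proof -
  let ?S = "sorted_list_of_set (supp e)"
  let ?L = "length (flat e)"
  have mono: "\<forall>k l. k < l \<and> l < ?L \<longrightarrow> ?S ! k < ?S ! l"
    using sorted_list_of_set_nth_less_iff[OF assms] by (simp add: length_flat)
  have "e i = (\<Sum>k<?L. if ?S ! k = i then flat e ! k else 0)" for i
  proof (cases "i \<in> supp e")
    case True
    then obtain k0 where k0: "k0 < ?L" "?S ! k0 = i"
      using assms by (metis in_set_conv_nth length_flat length_sorted_list_of_set set_sorted_list_of_set)
    have "(\<Sum>k<?L. if ?S ! k = i then flat e ! k else 0) = (\<Sum>k<?L. if k = k0 then flat e ! k else 0)"
      using k0 by (intro sum.cong) (auto simp: length_flat nth_eq_iff_index_eq)
    then show ?thesis using k0 by (simp add: nth_flat length_flat)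
  next
    case False
    have "?S ! k \<noteq> i" if "k < ?L" for k
      using that assms nth_mem[of k ?S] False by (auto simp: length_flat)
    then show ?thesis
      using False unfolding supp_def by (auto intro!: sum.neutral)
  qed
  then show ?thesis unfolding M_def using mono by (auto intro!: exI[of _ "\<lambda>k. ?S ! k"])
qed

lemma spread_composition:
  assumes "is_comp \<beta>" "\<forall>k l. k < l \<and> l < length \<beta> \<longrightarrow> j k < j l"
    and e: "e = (\<lambda>i. \<Sum>k<length \<beta>. if j k = i then \<beta> ! k else 0)"
  shows "\<And>k. k < length \<beta> \<Longrightarrow> e (j k) = \<beta> ! k" "supp e = j ` {..<length \<beta>}"
proof -
  let ?L = "length \<beta>"
  have inj: "inj_on j {..<?L}"
  proof (rule inj_onI)
    fix k l assume "k \<in> {..<?L}" "l \<in> {..<?L}" "j k = j l"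
    then show "k = l" using assms(2)[rule_format, of k l] assms(2)[rule_format, of l k]
      by (cases k l rule: linorder_cases) auto
  qed
  show e_j: "e (j k) = \<beta> ! k" if "k < ?L" for k
  proof -
    have "e (j k) = (\<Sum>k'<?L. if k' = k then \<beta> ! k' else 0)"
      using that inj_on_eq_iff[OF inj] by (subst e) (intro sum.cong, auto)
    then show ?thesis using that by simp
  qed
  show "supp e = j ` {..<?L}"
  proof (intro equalityI subsetI)
    fix i assume i: "i \<in> supp e"
    show "i \<in> j ` {..<?L}"
    proof (rule ccontr)
      assume "i \<notin> j ` {..<?L}"
      then have "e i = 0" by (subst e) (auto intro!: sum.neutral)
      then show False using i unfolding supp_def by simp
    qed
  next
    fix i assume "i \<in> j ` {..<?L}"
    then show "i \<in> supp e"
      using e_j assms(1) unfolding supp_def is_comp_def by auto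
  qed
qed

lemma M_ne_0_imp:
  assumes "is_comp \<beta>" "M \<beta> e \<noteq> 0"
  shows "finite (supp e) \<and> \<beta> = flat e"
proof -
  let ?L = "length \<beta>"
  have "\<exists>j::nat \<Rightarrow> nat. (\<forall>k l. k < l \<and> l < ?L \<longrightarrow> j k < j l) \<and>
      e = (\<lambda>i. \<Sum>k<?L. if j k = i then \<beta> ! k else 0)"
    using assms(2) unfolding M_def by meson
  then obtain j where j: "\<forall>k l. k < l \<and> l < ?L \<longrightarrow> j k < j l"
    and e: "e = (\<lambda>i. \<Sum>k<?L. if j k = i then \<beta> ! k else 0)"
    by blast
  note e_j = spread_composition(1)[OF assms(1) j e] and supp = spread_composition(2)[OF assms(1) j e]
  have "sorted_wrt (<) (map j [0..<?L])" "set (map j [0..<?L]) = supp e"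
    using j supp by (simp_all add: sorted_wrt_iff_nth_less atLeast0LessThan)
  moreover have "finite (supp e)" using supp by simp
  moreover have "length (map j [0..<?L]) = card (supp e)"
    using calculation distinct_card[of "map j [0..<?L]"] strict_sorted_iff by fastforce
  ultimately have "sorted_list_of_set (supp e) = map j [0..<?L]"
    using sorted_list_of_set_unique by blast
  then have "flat e = map (\<lambda>k. \<beta> ! k) [0..<?L]"
    unfolding flat_def using e_j by simp
  then show ?thesis using supp map_nth[of \<beta>] by simp
qed

lemma M_eq:
  assumes "is_comp \<beta>"
  shows "M \<beta> e = of_bool (finite (supp e) \<and> \<beta> = flat e)"
proof (cases "M \<beta> e = 0")
  case True
  then show ?thesis using M_flat[of e] by auto
next
  case False
  then have "finite (supp e) \<and> \<beta> = flat e" using M_ne_0_imp[OF assms] by blast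
  then show ?thesis using M_flat[of e] by simp
qed

lemma sum_take_strict_mono:
  assumes "is_comp \<beta>" "c < c'" "c' \<le> length \<beta>"
  shows "sum_list (take c \<beta>) < sum_list (take c' \<beta>)"
  using assms(2,3)
proof (induction c')
  case (Suc c')
  have "\<beta> ! c' > 0" using assms(1) Suc.prems unfolding is_comp_def by simp
  then show ?case
    using Suc by (cases "c = c'") (auto simp: take_Suc_conv_app_nth)
qed simp

text \<open>\<open>comp n J\<close> lists the gaps of the chain \<open>0 < j\<^sub>1 < \<dots> < j\<^sub>i < n\<close>.\<close>

definition comp_chain :: "nat \<Rightarrow> nat set \<Rightarrow> nat list" where
  "comp_chain n J = 0 # sorted_list_of_set J @ [n]"

lemma sorted_comp_chain:
  assumes "J \<subseteq> {1..<n}" "0 < n"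
  shows "sorted_wrt (<) (comp_chain n J)"
  using assms finite_subset[OF assms(1)] by (auto simp: comp_chain_def sorted_wrt_append)

lemma length_comp: "J \<subseteq> {1..<n} \<Longrightarrow> 0 < n \<Longrightarrow> length (comp n J) = card J + 1"
  using finite_subset[of J "{1..<n}"] by (simp add: comp_def Let_def)

lemma nth_comp:
  assumes "J \<subseteq> {1..<n}" "0 < n" "c \<le> card J"
  shows "comp n J ! c = comp_chain n J ! Suc c - comp_chain n J ! c"
proof -
  let ?s = "sorted_list_of_set J"
  have "finite J" using assms(1) finite_subset by blast
  have "comp n J = map2 (-) (?s @ [n]) (0 # ?s)"
    using assms(2) by (simp add: comp_def Let_def)
  moreover have "(0 # ?s) ! c = comp_chain n J ! c"
    using assms(3) \<open>finite J\<close> by (simp add: comp_chain_def nth_append nth_Cons split: nat.split)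
  ultimately show ?thesis
    using assms(3) \<open>finite J\<close> by (simp add: comp_chain_def)
qed

lemma sum_take_comp:
  assumes "J \<subseteq> {1..<n}" "0 < n" "c \<le> card J + 1"
  shows "sum_list (take c (comp n J)) = comp_chain n J ! c"
  using assms(3)
proof (induction c)
  case (Suc c)
  have "comp_chain n J ! c < comp_chain n J ! Suc c"
    using sorted_wrt_nth_less[OF sorted_comp_chain[OF assms(1,2)], of c "Suc c"] Suc.prems
    by (simp add: comp_chain_def)
  then show ?case
    using Suc nth_comp[OF assms(1,2), of c] length_comp[OF assms(1,2)]
    by (simp add: take_Suc_conv_app_nth)
qed (simp add: comp_chain_def)

lemma is_comp_comp:
  assumes "J \<subseteq> {1..<n}"
  shows "is_comp (comp n J)"
proof (cases "n = 0")
  case False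
  show ?thesis unfolding is_comp_def
  proof
    fix x assume "x \<in> set (comp n J)"
    then obtain c where "c < length (comp n J)" and c: "x = comp n J ! c"
      by (auto simp: in_set_conv_nth)
    then have "c \<le> card J" using length_comp[OF assms] False by simp
    have "comp_chain n J ! c < comp_chain n J ! Suc c"
      using sorted_wrt_nth_less[OF sorted_comp_chain[OF assms], of c "Suc c"] False \<open>c \<le> card J\<close>
      by (simp add: comp_chain_def)
    then show "0 < x" using c nth_comp[OF assms _ \<open>c \<le> card J\<close>] False by simp
  qed
qed (simp add: comp_def is_comp_def)

lemma sum_list_comp:
  assumes "J \<subseteq> {1..<n}"
  shows "sum_list (comp n J) = n"
proof (cases "n = 0")
  case False
  then show ?thesis
    using sum_take_comp[OF assms, of "card J + 1"] length_comp[OF assms]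
    by (simp add: comp_chain_def nth_append)
qed (simp add: comp_def)

lemma partial_sums_comp:
  assumes "J \<subseteq> {1..<n}" "0 < n"
  shows "partial_sums (comp n J) = insert 0 (insert n J)"
proof -
  have "partial_sums (comp n J) = (\<lambda>c. comp_chain n J ! c) ` {..card J + 1}"
    unfolding partial_sums_def using sum_take_comp[OF assms] length_comp[OF assms]
    by (auto intro!: exI)
  also have "{..card J + 1} = {..<length (comp_chain n J)}"
    using finite_subset[OF assms(1)] by (auto simp: comp_chain_def)
  also have "(\<lambda>c. comp_chain n J ! c) ` {..<length (comp_chain n J)} = set (comp_chain n J)"
    by (auto simp: set_conv_nth)
  finally show ?thesis
    using finite_subset[OF assms(1)] by (auto simp: comp_chain_def)
qed

lemma comp_inj:
  assumes "J \<subseteq> {1..<n}" "J' \<subseteq> {1..<n}" "comp n J = comp n J'"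
  shows "J = J'"
proof (cases "n = 0")
  case False
  then have "insert 0 (insert n J) = insert 0 (insert n J')"
    using partial_sums_comp[OF assms(1)] partial_sums_comp[OF assms(2)] assms(3) by simp
  moreover have "J = insert 0 (insert n J) - {0, n}" "J' = insert 0 (insert n J') - {0, n}"
    using assms(1,2) by auto
  ultimately show ?thesis by simp
qed (use assms in simp)

lemma comp_surj:
  assumes "is_comp \<beta>"
  shows "\<exists>J. J \<subseteq> {1..<sum_list \<beta>} \<and> comp (sum_list \<beta>) J = \<beta>"
proof (cases "\<beta> = []")
  case False
  let ?L = "length \<beta>" and ?n = "sum_list \<beta>"
  define Q where "Q c = sum_list (take c \<beta>)" for c
  have Qs: "Q c < Q c'" if "c < c'" "c' \<le> ?L" for c c'
    unfolding Q_def using sum_take_strict_mono[OF assms that] .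
  have L: "1 \<le> ?L" using False by (cases \<beta>) auto
  have n: "0 < ?n" using Qs[of 0 ?L] L False unfolding Q_def by simp
  define J where "J = Q ` {1..<?L}"
  have J: "J \<subseteq> {1..<?n}"
  proof
    fix x assume "x \<in> J"
    then obtain c where "1 \<le> c" "c < ?L" "x = Q c" unfolding J_def by auto
    then show "x \<in> {1..<?n}" using Qs[of 0 c] Qs[of c ?L] unfolding Q_def by simp
  qed
  have inj: "inj_on Q {1..<?L}"
  proof (rule inj_onI)
    fix c c' assume "c \<in> {1..<?L}" "c' \<in> {1..<?L}" "Q c = Q c'"
    then show "c = c'" using Qs[of c c'] Qs[of c' c] by (cases c c' rule: linorder_cases) auto
  qed
  have "sorted_wrt (<) (map Q [1..<?L])"
    unfolding sorted_wrt_iff_nth_less using Qs by simp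
  moreover have "length (map Q [1..<?L]) = card J"
    using inj by (simp add: J_def card_image)
  ultimately have "sorted_list_of_set J = map Q [1..<?L]"
    using sorted_list_of_set_unique[of J "map Q [1..<?L]"] by (simp add: J_def)
  moreover have "Q 0 = 0" "Q ?L = ?n" unfolding Q_def by simp_all
  ultimately have "comp_chain ?n J = map Q [0..<Suc ?L]"
    using L by (simp add: comp_chain_def upt_conv_Cons upt_Suc_append del: upt_Suc)
  moreover have "card J = ?L - 1"
    using inj by (simp add: J_def card_image)
  ultimately have "comp ?n J ! k = Q (Suc k) - Q k" if "k < ?L" for k
    using nth_comp[OF J n, of k] that L by (simp del: upt_Suc)
  then have "comp ?n J ! k = \<beta> ! k" if "k < ?L" for k
    using that unfolding Q_def by (simp add: take_Suc_conv_app_nth)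
  moreover have "length (comp ?n J) = ?L"
    using length_comp[OF J n] \<open>card J = ?L - 1\<close> L by simp
  ultimately show ?thesis using J by (metis nth_equalityI)
qed (simp add: comp_def)

lemma exists_comp_superset_iff:
  assumes "I \<subseteq> {1..<n}" "is_comp \<beta>"
  shows "(\<exists>J. I \<subseteq> J \<and> J \<subseteq> {1..<n} \<and> comp n J = \<beta>) \<longleftrightarrow>
    sum_list \<beta> = n \<and> I \<subseteq> partial_sums \<beta>"
proof
  assume "\<exists>J. I \<subseteq> J \<and> J \<subseteq> {1..<n} \<and> comp n J = \<beta>"
  then obtain J where J: "I \<subseteq> J" "J \<subseteq> {1..<n}" "comp n J = \<beta>" by blast
  then show "sum_list \<beta> = n \<and> I \<subseteq> partial_sums \<beta>"
    using sum_list_comp[OF J(2)] partial_sums_comp[OF J(2)] assms(1) by (cases "n = 0") auto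
next
  assume \<beta>: "sum_list \<beta> = n \<and> I \<subseteq> partial_sums \<beta>"
  then obtain J where J: "J \<subseteq> {1..<n}" "comp n J = \<beta>" using comp_surj[OF assms(2)] by blast
  have "I \<subseteq> J"
  proof
    fix x assume "x \<in> I"
    then have "1 \<le> x" "x < n" "x \<in> partial_sums (comp n J)" using assms(1) \<beta> J(2) by auto
    then show "x \<in> J" using partial_sums_comp[OF J(1)] by auto
  qed
  then show "\<exists>J. I \<subseteq> J \<and> J \<subseteq> {1..<n} \<and> comp n J = \<beta>" using J by blast
qed

lemma sum_supersets_comp_eq:
  assumes "I \<subseteq> {1..<n}" "is_comp \<beta>"
  shows "(\<Sum>J\<in>{J. I \<subseteq> J \<and> J \<subseteq> {1..<n}}. of_bool (comp n J = \<beta>) :: 'a::semiring_1)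
    = of_bool (sum_list \<beta> = n \<and> I \<subseteq> partial_sums \<beta>)"
proof (cases "\<exists>J. I \<subseteq> J \<and> J \<subseteq> {1..<n} \<and> comp n J = \<beta>")
  case True
  then obtain J0 where J0: "I \<subseteq> J0" "J0 \<subseteq> {1..<n}" "comp n J0 = \<beta>" by blast
  have "finite {J. I \<subseteq> J \<and> J \<subseteq> {1..<n}}"
    by (rule finite_subset[of _ "Pow {1..<n}"]) auto
  moreover have "comp n J = \<beta> \<longleftrightarrow> J = J0" if "J \<subseteq> {1..<n}" for J
    using comp_inj[OF that J0(2)] J0(3) by auto
  ultimately have "(\<Sum>J\<in>{J. I \<subseteq> J \<and> J \<subseteq> {1..<n}}. of_bool (comp n J = \<beta>) :: 'a)
      = (\<Sum>J\<in>{J. I \<subseteq> J \<and> J \<subseteq> {1..<n}}. if J = J0 then 1 else 0)"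
    by (intro sum.cong) auto
  also have "\<dots> = 1"
    using J0 \<open>finite {J. I \<subseteq> J \<and> J \<subseteq> {1..<n}}\<close> by (simp add: sum.delta)
  finally have "(\<Sum>J\<in>{J. I \<subseteq> J \<and> J \<subseteq> {1..<n}}. of_bool (comp n J = \<beta>) :: 'a) = 1" .
  then show ?thesis using True exists_comp_superset_iff[OF assms] by simp
next
  case False
  then show ?thesis using exists_comp_superset_iff[OF assms] by (auto intro!: sum.neutral)
qed

lemma Lfun_eq:
  assumes "I \<subseteq> {1..<n}"
  shows "Lfun n I e = of_bool (finite (supp e) \<and> sum_list (flat e) = n \<and> I \<subseteq> partial_sums (flat e))"
proof -
  have "Lfun n I e = (\<Sum>J\<in>{J. I \<subseteq> J \<and> J \<subseteq> {1..<n}}.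
      of_bool (finite (supp e)) * of_bool (comp n J = flat e))"
    unfolding Lfun_def by (intro sum.cong) (auto simp: M_eq is_comp_comp)
  also have "\<dots> = of_bool (finite (supp e)) * of_bool (sum_list (flat e) = n \<and> I \<subseteq> partial_sums (flat e))"
    unfolding sum_distrib_left[symmetric] sum_supersets_comp_eq[OF assms is_comp_flat] ..
  finally show ?thesis by simp
qed

lemma has_L_word_iff_flat:
  assumes "I \<subseteq> {1..<m}"
  shows "has_L_word m I e \<longleftrightarrow> finite (supp e) \<and> sum_list (flat e) = m \<and> I \<subseteq> partial_sums (flat e)"
proof
  assume "has_L_word m I e"
  then obtain B where B: "supported_below e B" "psum e B = m" and I: "I \<subseteq> range (psum e)"
    using has_L_word_iff_psum[OF assms] by blast
  then have "finite (supp e)" using finite_supp_iff by blast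
  then show "finite (supp e) \<and> sum_list (flat e) = m \<and> I \<subseteq> partial_sums (flat e)"
    using psum_eq_sum_list_flat[OF _ B(1)] B(2) I range_psum by simp
next
  assume e: "finite (supp e) \<and> sum_list (flat e) = m \<and> I \<subseteq> partial_sums (flat e)"
  then obtain B where B: "supported_below e B" using finite_supp_iff by blast
  then have "psum e B = m" using psum_eq_sum_list_flat e by simp
  then show "has_L_word m I e"
    using has_L_word_iff_psum[OF assms] B e range_psum by auto
qed

lemma Lfun_eq_has_L_word: "I \<subseteq> {1..<m} \<Longrightarrow> Lfun m I e = of_bool (has_L_word m I e)"
  using Lfun_eq has_L_word_iff_flat by simp

section \<open>Linear independence of the functions \<open>\<chi>\<^sup>I\<close>\<close>

lemma sum_Pow_prod_bool:
  fixes F :: "'a \<Rightarrow> bool \<Rightarrow> 'b::comm_semiring_1"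
  assumes "finite X"
  shows "(\<Sum>S\<in>Pow X. \<Prod>i\<in>X. F i (i \<in> S)) = (\<Prod>i\<in>X. F i True + F i False)"
proof -
  have "(\<Prod>i\<in>X. F i (i \<in> S)) = (\<Prod>i\<in>S. F i True) * (\<Prod>i\<in>X - S. F i False)" if "S \<subseteq> X" for S
  proof -
    have "(\<Prod>i\<in>X. F i (i \<in> S)) = (\<Prod>i\<in>S. F i (i \<in> S)) * (\<Prod>i\<in>X - S. F i (i \<in> S))"
      using prod.subset_diff[OF that assms, of "\<lambda>i. F i (i \<in> S)"] by (simp add: mult.commute)
    also have "(\<Prod>i\<in>S. F i (i \<in> S)) = (\<Prod>i\<in>S. F i True)" by (rule prod.cong) auto
    also have "(\<Prod>i\<in>X - S. F i (i \<in> S)) = (\<Prod>i\<in>X - S. F i False)" by (rule prod.cong) auto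
    finally show ?thesis .
  qed
  then show ?thesis by (simp add: prod_add[OF assms])
qed

lemma chi_indicator:
  "chi \<nu> N L (\<lambda>i. of_bool (i \<in> S)) =
    (\<Prod>i\<in>{1..<N}. if i \<in> L then 1 else if i \<in> S then psi \<nu> 1 else 1)"
proof -
  have "chi \<nu> N L (\<lambda>i. of_bool (i \<in> S)) = (\<Prod>i\<in>{1..<N} - L. if i \<in> S then psi \<nu> 1 else 1)"
    unfolding chi_def by (rule prod.cong) (auto simp: psi_def)
  also have "\<dots> = (\<Prod>i\<in>{1..<N}. if i \<in> L then 1 else if i \<in> S then psi \<nu> 1 else 1)"
    by (rule prod.mono_neutral_cong_left) auto
  finally show ?thesis .
qed

text \<open>Evaluated at the indicator vectors of subsets of \<open>[N-1]\<close>, the \<open>\<chi>\<^sup>L\<close> form a tensor power of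
  the invertible matrix \<open>((1, 1), (r, 1))\<close>, \<open>r = \<psi>(1) \<noteq> 1\<close>; the dual basis is again a tensor
  power.\<close>

lemma chi_dual_basis:
  assumes "1 < \<nu>" "K \<subseteq> {1..<N}"
  obtains w where "\<And>L. L \<subseteq> {1..<N} \<Longrightarrow>
    (\<Sum>S\<in>Pow {1..<N}. w S * chi \<nu> N L (\<lambda>i. of_bool (i \<in> S))) = of_bool (K = L)"
proof
  let ?X = "{1..<N}" and ?r = "psi \<nu> 1"
  have "?r \<noteq> 1"
  proof
    assume "?r = 1"
    then have "- 1 = (of_nat \<nu> - 1 :: complex)"
      using assms(1) by (simp add: psi_def field_simps)
    then show False using assms(1) by (simp add: algebra_simps)
  qed
  then have r1: "?r - 1 \<noteq> 0" by simp
  define wt where "wt i b = (if b then (if i \<in> K then - 1 else 1) else (if i \<in> K then ?r else - 1)) / (?r - 1)"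
    for i :: nat and b
  define u where "u L i b = (if i \<in> L then 1 else if b then ?r else 1)" for L :: "nat set" and i b
  fix L assume L: "L \<subseteq> ?X"
  have "(\<Sum>S\<in>Pow ?X. (\<Prod>i\<in>?X. wt i (i \<in> S)) * chi \<nu> N L (\<lambda>i. of_bool (i \<in> S)))
      = (\<Sum>S\<in>Pow ?X. \<Prod>i\<in>?X. wt i (i \<in> S) * u L i (i \<in> S))"
    unfolding chi_indicator u_def by (simp add: prod.distrib)
  also have "\<dots> = (\<Prod>i\<in>?X. wt i True * u L i True + wt i False * u L i False)"
    by (rule sum_Pow_prod_bool) simp
  also have "\<dots> = (\<Prod>i\<in>?X. of_bool ((i \<in> K) = (i \<in> L)))"
    using r1 by (intro prod.cong) (auto simp: wt_def u_def divide_simps)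
  also have "\<dots> = of_bool (K = L)"
    using assms(2) L by (auto simp: prod_zero_iff)
  finally show "(\<Sum>S\<in>Pow ?X. (\<Prod>i\<in>?X. wt i (i \<in> S)) * chi \<nu> N L (\<lambda>i. of_bool (i \<in> S)))
      = of_bool (K = L)" .
qed

lemma chi_coeffs_eq_0:
  assumes "1 < \<nu>" and vanish: "\<forall>g\<in>Qn \<nu> N. (\<Sum>I\<in>Pow {1..<N}. d I * chi \<nu> N I g) = 0"
    and "K \<subseteq> {1..<N}"
  shows "d K = 0"
proof -
  let ?X = "{1..<N}"
  obtain w where w: "\<And>L. L \<subseteq> ?X \<Longrightarrow>
      (\<Sum>S\<in>Pow ?X. w S * chi \<nu> N L (\<lambda>i. of_bool (i \<in> S))) = of_bool (K = L)"
    using chi_dual_basis[OF assms(1,3)] by blast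
  have "(\<lambda>i. of_bool (i \<in> S)) \<in> Qn \<nu> N" if "S \<subseteq> ?X" for S
    using assms(1) that unfolding Qn_def QS_def by auto
  then have "0 = (\<Sum>S\<in>Pow ?X. w S * (\<Sum>I\<in>Pow ?X. d I * chi \<nu> N I (\<lambda>i. of_bool (i \<in> S))))"
    using vanish by simp
  also have "\<dots> = (\<Sum>I\<in>Pow ?X. d I * (\<Sum>S\<in>Pow ?X. w S * chi \<nu> N I (\<lambda>i. of_bool (i \<in> S))))"
    by (simp add: sum_distrib_left mult.left_commute) (rule sum.swap)
  also have "\<dots> = (\<Sum>I\<in>Pow ?X. d I * of_bool (K = I))"
    using w by (intro sum.cong) auto
  also have "\<dots> = d K"
    using assms(3) by (simp add: sum.delta)
  finally show ?thesis by simp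
qed

lemma ch_eq:
  assumes "1 < \<nu>" and "\<forall>g\<in>Qn \<nu> N. f g = (\<Sum>I\<in>Pow {1..<N}. c I * chi \<nu> N I g)"
  shows "ch \<nu> N f = (\<lambda>e. \<Sum>I\<in>Pow {1..<N}. c I * Lfun N I e)"
  unfolding ch_def
proof (rule the_equality)
  fix q assume "\<exists>c'. (\<forall>g\<in>Qn \<nu> N. f g = (\<Sum>I\<in>Pow {1..<N}. c' I * chi \<nu> N I g)) \<and>
      q = (\<lambda>e. \<Sum>I\<in>Pow {1..<N}. c' I * Lfun N I e)"
  then obtain c' where c': "\<forall>g\<in>Qn \<nu> N. f g = (\<Sum>I\<in>Pow {1..<N}. c' I * chi \<nu> N I g)"
    and q: "q = (\<lambda>e. \<Sum>I\<in>Pow {1..<N}. c' I * Lfun N I e)" by blast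
  have "\<forall>g\<in>Qn \<nu> N. (\<Sum>I\<in>Pow {1..<N}. (c' I - c I) * chi \<nu> N I g) = 0"
    using c' assms(2) by (simp add: algebra_simps sum_subtractf)
  then have "c' I = c I" if "I \<in> Pow {1..<N}" for I
    using chi_coeffs_eq_0[OF assms(1), of N "\<lambda>I. c' I - c I" I] that by simp
  then show "q = (\<lambda>e. \<Sum>I\<in>Pow {1..<N}. c I * Lfun N I e)"
    unfolding q by (intro ext sum.cong) auto
qed (use assms(2) in blast)

lemma ch2_eq:
  assumes "1 < \<nu>" and "\<forall>a\<in>Qn \<nu> k. \<forall>b\<in>Qn \<nu> l.
    F a b = (\<Sum>I\<in>Pow {1..<k}. \<Sum>J\<in>Pow {1..<l}. c I J * (chi \<nu> k I a * chi \<nu> l J b))"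
  shows "ch2 \<nu> k l F = (\<lambda>p. \<Sum>I\<in>Pow {1..<k}. \<Sum>J\<in>Pow {1..<l}. c I J * tens (Lfun k I) (Lfun l J) p)"
  unfolding ch2_def
proof (rule the_equality)
  fix q assume "\<exists>c'. (\<forall>a\<in>Qn \<nu> k. \<forall>b\<in>Qn \<nu> l.
      F a b = (\<Sum>I\<in>Pow {1..<k}. \<Sum>J\<in>Pow {1..<l}. c' I J * (chi \<nu> k I a * chi \<nu> l J b))) \<and>
    q = (\<lambda>p. \<Sum>I\<in>Pow {1..<k}. \<Sum>J\<in>Pow {1..<l}. c' I J * tens (Lfun k I) (Lfun l J) p)"
  then obtain c' where c': "\<forall>a\<in>Qn \<nu> k. \<forall>b\<in>Qn \<nu> l.
      F a b = (\<Sum>I\<in>Pow {1..<k}. \<Sum>J\<in>Pow {1..<l}. c' I J * (chi \<nu> k I a * chi \<nu> l J b))"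
    and q: "q = (\<lambda>p. \<Sum>I\<in>Pow {1..<k}. \<Sum>J\<in>Pow {1..<l}. c' I J * tens (Lfun k I) (Lfun l J) p)"
    by blast
  define d where "d I J = c' I J - c I J" for I J
  have "(\<Sum>I\<in>Pow {1..<k}. (\<Sum>J\<in>Pow {1..<l}. d I J * chi \<nu> l J b) * chi \<nu> k I a) = 0"
    if "a \<in> Qn \<nu> k" "b \<in> Qn \<nu> l" for a b
    using c' assms(2) that unfolding d_def
    by (simp add: algebra_simps sum_subtractf sum_distrib_left sum_distrib_right)
  then have "(\<Sum>J\<in>Pow {1..<l}. d I J * chi \<nu> l J b) = 0"
    if "I \<in> Pow {1..<k}" "b \<in> Qn \<nu> l" for I b
    using chi_coeffs_eq_0[OF assms(1), of k "\<lambda>I. \<Sum>J\<in>Pow {1..<l}. d I J * chi \<nu> l J b" I] that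
    by (simp add: mult.commute)
  then have "c' I J = c I J" if "I \<in> Pow {1..<k}" "J \<in> Pow {1..<l}" for I J
    using chi_coeffs_eq_0[OF assms(1), of l "d I" J] that unfolding d_def by simp
  then show "q = (\<lambda>p. \<Sum>I\<in>Pow {1..<k}. \<Sum>J\<in>Pow {1..<l}. c I J * tens (Lfun k I) (Lfun l J) p)"
    unfolding q by (intro ext sum.cong refl) auto
qed (use assms(2) in blast)

section \<open>The product \<open>m\<^sub>A\<close> of two functions \<open>\<chi>\<close>\<close>

lemma Max_conn: "Max ` conn A = {s\<in>A. Suc s \<notin> A}"
proof (intro equalityI subsetI)
  fix x assume "x \<in> Max ` conn A"
  then obtain B where B: "B \<in> conn A" "x = Max B" by auto
  then obtain a b where ab: "a \<le> b" "B = {a..b}" unfolding conn_def consec_def by blast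
  have BA: "B \<subseteq> A" and maximal: "\<And>C. C \<subseteq> A \<Longrightarrow> consec C \<Longrightarrow> B \<subseteq> C \<Longrightarrow> C = B"
    using B(1) unfolding conn_def by blast+
  have "Max {a..b} = b" using ab(1) by (intro Max_eqI) auto
  then have "x = b" using B(2) ab by simp
  moreover have "Suc b \<notin> A"
  proof
    assume "Suc b \<in> A"
    then have "{a..Suc b} \<subseteq> A" using BA ab by (auto simp: le_Suc_eq)
    moreover have "consec {a..Suc b}" unfolding consec_def using ab by auto
    moreover have "B \<subseteq> {a..Suc b}" using ab by auto
    ultimately have "{a..Suc b} = B" using maximal by blast
    then show False using ab by (metis atLeastAtMost_iff le_Suc_eq not_less_eq_eq order_refl)
  qed
  ultimately show "x \<in> {s\<in>A. Suc s \<notin> A}" using ab BA by auto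
next
  fix s assume s: "s \<in> {s\<in>A. Suc s \<notin> A}"
  define a where "a = (LEAST a. {a..s} \<subseteq> A)"
  have "{s..s} \<subseteq> A" using s by simp
  then have aA: "{a..s} \<subseteq> A" unfolding a_def by (rule LeastI)
  have amin: "a \<le> c" if "{c..s} \<subseteq> A" for c unfolding a_def using that by (rule Least_le)
  have as: "a \<le> s" using amin \<open>{s..s} \<subseteq> A\<close> .
  have "{a..s} \<in> conn A" unfolding conn_def
  proof (intro CollectI conjI allI impI)
    show "consec {a..s}" unfolding consec_def using as by blast
    fix C assume C: "C \<subseteq> A \<and> consec C \<and> {a..s} \<subseteq> C"
    then obtain c d where cd: "c \<le> d" "C = {c..d}" unfolding consec_def by blast
    then have "c \<le> a" "s \<le> d" using C as by auto
    moreover have "d \<le> s"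
    proof (rule ccontr)
      assume "\<not> d \<le> s"
      then have "Suc s \<in> C" using cd \<open>c \<le> a\<close> as by auto
      then show False using C s by auto
    qed
    ultimately show "C = {a..s}" using amin[of c] C cd by fastforce
  qed (rule aA)
  moreover have "Max {a..s} = s" using as by (intro Max_eqI) auto
  ultimately show "s \<in> Max ` conn A" by (metis image_eqI)
qed

lemma c1_eq: "c1 N A = {s\<in>A. Suc s \<notin> A} - {N}"
  unfolding c1_def Max_conn by simp

lemma c2_eq: "c2 N A = {s\<in>{1..<N}. s \<notin> A \<and> Suc s \<in> A}"
  unfolding c2_def Max_conn by auto

text \<open>For a shuffle with second-word positions \<open>A\<close>, the set \<open>K(A, I, J)\<close> of positions \<open>s\<close> that
  must be strict ascents: a passage from the second word to the first, an ascent \<open>I\<close> of the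
  first word, or an ascent \<open>J\<close> of the second word.\<close>

definition shuffle_set :: "nat \<Rightarrow> nat set \<Rightarrow> nat set \<Rightarrow> nat set \<Rightarrow> nat set" where
  "shuffle_set N A I J = {s\<in>{1..<N}. (s \<in> A \<and> Suc s \<notin> A)
     \<or> (s \<notin> A \<and> Suc s \<notin> A \<and> rank_in ({1..N} - A) s \<in> I)
     \<or> (s \<in> A \<and> Suc s \<in> A \<and> rank_in A s \<in> J)}"

lemma shuffle_set_subset: "shuffle_set N A I J \<subseteq> {1..<N}"
  unfolding shuffle_set_def by auto

lemma kth_elem_image_Diff:
  assumes "finite X"
  shows "kth_elem X ` ({1..<card X} - I) = {s\<in>X. rank_in X s < card X \<and> rank_in X s \<notin> I}"
proof (intro equalityI subsetI)
  fix s assume "s \<in> kth_elem X ` ({1..<card X} - I)"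
  then obtain k where "k \<in> {1..<card X} - I" "s = kth_elem X k" by blast
  then show "s \<in> {s\<in>X. rank_in X s < card X \<and> rank_in X s \<notin> I}"
    using kth_elem_in[OF assms] rank_in_kth_elem[OF assms] by auto
next
  fix s assume s: "s \<in> {s\<in>X. rank_in X s < card X \<and> rank_in X s \<notin> I}"
  then have "rank_in X s \<in> {1..<card X} - I" using rank_in_pos[OF assms] by auto
  then show "s \<in> kth_elem X ` ({1..<card X} - I)" using kth_elem_rank_in[OF assms] s by force
qed

text \<open>The factor of \<^const>\<open>sA\<close> contributed by one of the two words, read along its positions \<open>X\<close>.
  Its last letter sits at the end of a block of \<open>X\<close>, where \<open>h\<close> vanishes.\<close>

lemma chi_along_positions:
  assumes "finite X" "card X = m" "1 \<le> m"
    and block_end: "\<And>s. s \<in> X \<Longrightarrow> Suc s \<notin> X \<Longrightarrow> h s = 0"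
    and inner: "\<And>s. s \<in> X \<Longrightarrow> Suc s \<in> X \<Longrightarrow> h s = g s"
  shows "chi \<nu> m I (\<lambda>k. if k \<in> {1..<m} then h (kth_elem X k) else 0) * psi \<nu> (h (kth_elem X m))
    = (\<Prod>s\<in>{s\<in>X. Suc s \<in> X \<and> rank_in X s \<notin> I}. psi \<nu> (g s))"
proof -
  let ?Q = "{s\<in>X. rank_in X s < m \<and> rank_in X s \<notin> I}"
  let ?P = "{s\<in>X. Suc s \<in> X \<and> rank_in X s \<notin> I}"
  have "kth_elem X m \<in> X" using kth_elem_in[OF assms(1)] assms(2,3) by simp
  moreover have "Suc (kth_elem X m) \<notin> X"
    using Suc_notin_if_rank_in_eq_card[OF assms(1) \<open>kth_elem X m \<in> X\<close>]
      rank_in_kth_elem[OF assms(1), of m] assms(2,3) by simp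
  ultimately have last: "psi \<nu> (h (kth_elem X m)) = 1" using block_end by (simp add: psi_def)
  have "inj_on (kth_elem X) ({1..<m} - I)"
  proof (rule inj_on_subset)
    show "inj_on (kth_elem X) {1..card X}" using inj_on_kth_elem[OF assms(1)] .
  qed (use assms(2) in auto)
  then have "chi \<nu> m I (\<lambda>k. if k \<in> {1..<m} then h (kth_elem X k) else 0)
      = (\<Prod>s\<in>kth_elem X ` ({1..<m} - I). psi \<nu> (h s))"
    unfolding chi_def by (simp add: prod.reindex)
  also have "\<dots> = (\<Prod>s\<in>?Q. psi \<nu> (h s))"
    using kth_elem_image_Diff[OF assms(1), of I] assms(2) by simp
  also have "\<dots> = (\<Prod>s\<in>?P. psi \<nu> (h s))"
  proof (rule prod.mono_neutral_right)
    show "?P \<subseteq> ?Q"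
    proof
      fix s assume s: "s \<in> ?P"
      then have "rank_in X s < rank_in X (Suc s)" "rank_in X (Suc s) \<le> m"
        using rank_in_Suc[OF assms(1), of s] rank_in_le_card[OF assms(1), of "Suc s"] assms(2)
        by auto
      then show "s \<in> ?Q" using s by simp
    qed
    show "\<forall>s\<in>?Q - ?P. psi \<nu> (h s) = 1"
    proof
      fix s assume "s \<in> ?Q - ?P"
      then have "s \<in> X" "Suc s \<notin> X" by auto
      then show "psi \<nu> (h s) = 1" using block_end by (simp add: psi_def)
    qed
  qed (use assms(1) in simp)
  also have "\<dots> = (\<Prod>s\<in>?P. psi \<nu> (g s))"
    using inner by (intro prod.cong) auto
  finally show ?thesis using last by simp
qed

lemma chi_shuffle_set:
  assumes "A \<subseteq> {1..N}"
  defines "X \<equiv> {1..N} - A"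
  shows "chi \<nu> N (shuffle_set N A I J) g = (\<Prod>s\<in>c2 N A. psi \<nu> (g s))
    * (\<Prod>s\<in>{s\<in>X. Suc s \<in> X \<and> rank_in X s \<notin> I}. psi \<nu> (g s))
    * (\<Prod>s\<in>{s\<in>A. Suc s \<in> A \<and> rank_in A s \<notin> J}. psi \<nu> (g s))"
proof -
  let ?P\<^sub>X = "{s\<in>X. Suc s \<in> X \<and> rank_in X s \<notin> I}" and ?P\<^sub>A = "{s\<in>A. Suc s \<in> A \<and> rank_in A s \<notin> J}"
  have A_bounds: "1 \<le> s \<and> s \<le> N" if "s \<in> A" for s using assms(1) that by auto
  then have "{1..<N} - shuffle_set N A I J = c2 N A \<union> ?P\<^sub>X \<union> ?P\<^sub>A"
    unfolding c2_eq X_def shuffle_set_def by (auto dest: A_bounds)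
  moreover have "finite (c2 N A)" "finite ?P\<^sub>X" "finite ?P\<^sub>A"
    using finite_subset[OF assms(1)] unfolding c2_eq X_def by auto
  moreover have "c2 N A \<inter> ?P\<^sub>X = {}" "(c2 N A \<union> ?P\<^sub>X) \<inter> ?P\<^sub>A = {}"
    unfolding c2_eq X_def by auto
  ultimately show ?thesis unfolding chi_def by (simp add: prod.union_disjoint)
qed

text \<open>The entries of \<open>g\<close> that \<^const>\<open>mA\<close> sets to \<open>0\<close> sit exactly at the ends of the blocks of \<open>A\<close> and
  of its complement.\<close>

lemma mA_chi_pos:
  assumes "1 \<le> m" "1 \<le> n" "A \<subseteq> {1..m + n}" "card A = n"
  shows "mA \<nu> m n A (chi \<nu> m I) (chi \<nu> n J) g = chi \<nu> (m + n) (shuffle_set (m + n) A I J) g"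
proof -
  define N where "N = m + n"
  define X where "X = {1..N} - A"
  define h where "h i = (if i \<in> {1..<N} - cc N A then g i else 0)" for i
  have finA: "finite A" using assms(3) finite_subset by blast
  have cardX: "card X = m"
    using card_Diff_subset[OF finA] assms(3,4) unfolding X_def N_def by simp
  have cc: "s \<in> cc N A \<longleftrightarrow> (s \<in> A \<and> Suc s \<notin> A \<and> s \<noteq> N) \<or> (s \<in> {1..<N} \<and> s \<notin> A \<and> Suc s \<in> A)"
    for s unfolding cc_def c1_eq c2_eq by auto
  have "h s = 0" if "s \<in> X" "Suc s \<notin> X" for s
    using that cc[of s] unfolding h_def X_def by auto
  moreover have "h s = g s" if "s \<in> X" "Suc s \<in> X" for s
    using that cc[of s] unfolding h_def X_def by auto
  ultimately have X_factor:
    "chi \<nu> m I (\<lambda>k. if k \<in> {1..<m} then h (kth_elem X k) else 0) * psi \<nu> (h (kth_elem X m))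
      = (\<Prod>s\<in>{s\<in>X. Suc s \<in> X \<and> rank_in X s \<notin> I}. psi \<nu> (g s))"
    using chi_along_positions[OF _ cardX assms(1)] unfolding X_def by blast
  have "h s = 0" if "s \<in> A" "Suc s \<notin> A" for s
    using that cc[of s] unfolding h_def by auto
  moreover have "h s = g s" if "s \<in> A" "Suc s \<in> A" for s
    using that assms(3) cc[of s] unfolding h_def N_def by auto
  ultimately have A_factor:
    "chi \<nu> n J (\<lambda>k. if k \<in> {1..<n} then h (kth_elem A k) else 0) * psi \<nu> (h (kth_elem A n))
      = (\<Prod>s\<in>{s\<in>A. Suc s \<in> A \<and> rank_in A s \<notin> J}. psi \<nu> (g s))"
    using chi_along_positions[OF finA assms(4,2)] by blast
  have "sA \<nu> m n A (chi \<nu> m I) (chi \<nu> n J) h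
      = (\<Prod>s\<in>{s\<in>X. Suc s \<in> X \<and> rank_in X s \<notin> I}. psi \<nu> (g s))
      * (\<Prod>s\<in>{s\<in>A. Suc s \<in> A \<and> rank_in A s \<notin> J}. psi \<nu> (g s))"
    using X_factor A_factor unfolding sA_def Let_def kth_elem_def X_def N_def by (simp add: mult.assoc)
  moreover have "mA \<nu> m n A (chi \<nu> m I) (chi \<nu> n J) g
      = (\<Prod>i\<in>c2 N A. psi \<nu> (g i)) * sA \<nu> m n A (chi \<nu> m I) (chi \<nu> n J) h"
    unfolding mA_def h_def N_def using assms(1,2) by simp
  ultimately show ?thesis
    using chi_shuffle_set[of A N] assms(3) unfolding X_def N_def by (simp add: mult.assoc)
qed

lemma shuffle_set_all: "J \<subseteq> {1..<n} \<Longrightarrow> shuffle_set n {1..n} I J = J"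
  unfolding shuffle_set_def using rank_in_atLeastAtMost by force

lemma shuffle_set_none: "I \<subseteq> {1..<m} \<Longrightarrow> shuffle_set m {} I J = I"
  unfolding shuffle_set_def using rank_in_atLeastAtMost by force

lemma mA_chi:
  assumes "A \<subseteq> {1..m + n}" "card A = n" "I \<subseteq> {1..<m}" "J \<subseteq> {1..<n}"
  shows "mA \<nu> m n A (chi \<nu> m I) (chi \<nu> n J) g = chi \<nu> (m + n) (shuffle_set (m + n) A I J) g"
proof -
  consider "m = 0" | "n = 0" | "1 \<le> m" "1 \<le> n" by linarith
  then show ?thesis
  proof cases
    case 1
    then have "A = {1..n}" using assms(1,2) by (simp add: card_subset_eq)
    then show ?thesis using 1 shuffle_set_all[OF assms(4)] by (simp add: mA_def chi_def)
  next
    case 2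
    then have "A = {}" using assms(1,2) by (simp add: finite_subset)
    then show ?thesis using 2 shuffle_set_none[OF assms(3)] by (simp add: mA_def chi_def)
  qed (use mA_chi_pos assms in blast)
qed

section \<open>The shuffle product of fundamental functions\<close>

lemma word_content_reindex:
  assumes "inj_on g Y"
  shows "word_content Y (\<lambda>k. h (g k)) = word_content (g ` Y) h"
proof
  fix i
  have "g ` {k\<in>Y. h (g k) = i} = {s\<in>g ` Y. h s = i}" by auto
  moreover have "inj_on g {k\<in>Y. h (g k) = i}"
    using assms by (rule inj_on_subset) auto
  ultimately show "word_content Y (\<lambda>k. h (g k)) i = word_content (g ` Y) h i"
    unfolding word_content_def using card_image by fastforce
qed

lemma word_content_kth_elem:
  "finite X \<Longrightarrow> word_content {1..card X} (\<lambda>k. h (kth_elem X k)) = word_content X h"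
  using word_content_reindex[OF inj_on_kth_elem, of X h] kth_elem_image[of X] by simp

lemma mono_on_kth_elem:
  assumes "finite X" "X \<subseteq> {1..N}" "mono_on {1..N} h"
  shows "mono_on {1..card X} (\<lambda>k. h (kth_elem X k))"
proof (rule mono_onI)
  fix k l assume kl: "k \<in> {1..card X}" "l \<in> {1..card X}" "k \<le> l"
  then have "kth_elem X k \<le> kth_elem X l"
    using kth_elem_strict_mono[OF assms(1), of k l] by (cases "k = l") auto
  moreover have "kth_elem X k \<in> X" "kth_elem X l \<in> X"
    using kth_elem_in[OF assms(1)] kl by auto
  then have "kth_elem X k \<in> {1..N}" "kth_elem X l \<in> {1..N}"
    using assms(2) by blast+
  ultimately show "h (kth_elem X k) \<le> h (kth_elem X l)" using mono_onD[OF assms(3)] by blast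
qed

lemma word_content_complement:
  assumes "finite Y" "A \<subseteq> Y"
  shows "word_content A h i = word_content Y h i - word_content (Y - A) h i"
proof -
  have "{s\<in>A. h s = i} = {s\<in>Y. h s = i} - {s\<in>Y - A. h s = i}" using assms(2) by auto
  moreover have "card ({s\<in>Y. h s = i} - {s\<in>Y - A. h s = i})
      = card {s\<in>Y. h s = i} - card {s\<in>Y - A. h s = i}"
    using assms(1) by (intro card_Diff_subset) auto
  ultimately show ?thesis unfolding word_content_def by simp
qed

lemma has_L_word_iff_ascents:
  assumes "mono_on {1..N} h" "word_content {1..N} h = e" "K \<subseteq> {1..<N}"
  shows "has_L_word N K e \<longleftrightarrow> (\<forall>k\<in>K. h k < h (Suc k))"
proof
  assume "has_L_word N K e"
  then obtain f where f: "mono_on {1..N} f" "word_content {1..N} f = e" "\<forall>k\<in>K. f k < f (Suc k)"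
    unfolding has_L_word_def by blast
  have "f s = h s" if "1 \<le> s" "s \<le> N" for s
    using mono_words_eq[OF f(1) assms(1)] f(2) assms(2) that by simp
  then show "\<forall>k\<in>K. h k < h (Suc k)" using f(3) assms(3) by force
qed (use assms in \<open>auto simp: has_L_word_def\<close>)

lemma word_content_mono: "X \<subseteq> Y \<Longrightarrow> finite Y \<Longrightarrow> word_content X h i \<le> word_content Y h i"
  unfolding word_content_def by (rule card_mono) auto

lemma shuffle_ascent_complement:
  fixes h :: "nat \<Rightarrow> nat"
  assumes "A \<subseteq> {1..N}" "mono_on {1..N} h" "\<forall>k\<in>shuffle_set N A I J. h k < h (Suc k)"
    and "k \<in> I" "1 \<le> k" "Suc k \<le> card ({1..N} - A)"
  shows "h (kth_elem ({1..N} - A) k) < h (kth_elem ({1..N} - A) (Suc k))"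
proof -
  let ?X = "{1..N} - A"
  let ?s = "kth_elem ?X k" and ?t = "kth_elem ?X (Suc k)"
  have s: "?s \<in> ?X" "rank_in ?X ?s = k" and t: "?t \<in> ?X"
    using kth_elem_in[of ?X] rank_in_kth_elem[of ?X k] assms(5,6) by auto
  have "?s < ?t" using kth_elem_strict_mono[of ?X k "Suc k"] assms(5,6) by simp
  show ?thesis
  proof (cases "Suc ?s = ?t")
    case True
    then have "?s \<in> shuffle_set N A I J"
      unfolding shuffle_set_def using s t assms(4) by auto
    then show ?thesis using assms(3) True by fastforce
  next
    case False
    define p where "p = ?t - 1"
    have p: "Suc p = ?t" "?s < p" "p < ?t" using \<open>?s < ?t\<close> False unfolding p_def by auto
    have "p \<notin> ?X" using not_in_between_kth_elem[of ?X k p] p assms(5,6) by simp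
    then have "p \<in> shuffle_set N A I J"
      unfolding shuffle_set_def using p s t by auto
    then have "h p < h ?t" using assms(3) p(1) by fastforce
    moreover have "h ?s \<le> h p" using mono_onD[OF assms(2), of ?s p] s t p by auto
    ultimately show ?thesis by linarith
  qed
qed

lemma shuffle_ascent_second:
  fixes h :: "nat \<Rightarrow> nat"
  assumes "A \<subseteq> {1..N}" "mono_on {1..N} h" "\<forall>k\<in>shuffle_set N A I J. h k < h (Suc k)"
    and "k \<in> J" "1 \<le> k" "Suc k \<le> card A"
  shows "h (kth_elem A k) < h (kth_elem A (Suc k))"
proof -
  have finA: "finite A" using assms(1) finite_subset by blast
  let ?s = "kth_elem A k" and ?t = "kth_elem A (Suc k)"
  have s: "?s \<in> A" "rank_in A ?s = k" and t: "?t \<in> A"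
    using kth_elem_in[OF finA] rank_in_kth_elem[OF finA, of k] assms(5,6) by auto
  have "?s < ?t" using kth_elem_strict_mono[OF finA, of k "Suc k"] assms(5,6) by simp
  then have sN: "?s \<in> {1..<N}" using s t assms(1) by fastforce
  show ?thesis
  proof (cases "Suc ?s = ?t")
    case True
    then have "?s \<in> shuffle_set N A I J"
      unfolding shuffle_set_def using s t sN assms(4) by auto
    then show ?thesis using assms(3) True by fastforce
  next
    case False
    then have "Suc ?s \<notin> A"
      using not_in_between_kth_elem[OF finA, of k "Suc ?s"] \<open>?s < ?t\<close> assms(5,6) by simp
    then have "?s \<in> shuffle_set N A I J" unfolding shuffle_set_def using s sN by auto
    then have "h ?s < h (Suc ?s)" using assms(3) by blast
    moreover have "h (Suc ?s) \<le> h ?t"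
      using mono_onD[OF assms(2), of "Suc ?s" ?t] \<open>?s < ?t\<close> False t assms(1) by auto
    ultimately show ?thesis by linarith
  qed
qed

lemma shuffle_block_tail_in:
  fixes h :: "nat \<Rightarrow> nat"
  assumes "A \<subseteq> {1..N}" "mono_on {1..N} h" "\<forall>k\<in>shuffle_set N A I J. h k < h (Suc k)"
    and "s \<in> A"
  shows "s \<le> t \<Longrightarrow> t \<le> N \<Longrightarrow> h s = h t \<Longrightarrow> t \<in> A"
proof (induction t)
  case 0
  then show ?case using assms(1,4) by auto
next
  case (Suc t)
  show ?case
  proof (cases "s = Suc t")
    case False
    then have "s \<le> t" "1 \<le> s" using Suc.prems assms(1,4) by auto
    then have "h s \<le> h t" "h t \<le> h (Suc t)"
      using mono_onD[OF assms(2), of s t] mono_onD[OF assms(2), of t "Suc t"] Suc.prems by auto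
    then have "h t = h s" using Suc.prems by linarith
    then have "t \<in> A" using Suc.IH \<open>s \<le> t\<close> Suc.prems by simp
    show ?thesis
    proof (rule ccontr)
      assume "Suc t \<notin> A"
      then have "t \<in> shuffle_set N A I J"
        unfolding shuffle_set_def using \<open>t \<in> A\<close> \<open>1 \<le> s\<close> \<open>s \<le> t\<close> Suc.prems by auto
      then show False using assms(3) \<open>h t = h s\<close> Suc.prems by fastforce
    qed
  qed (use assms(4) in simp)
qed

lemma shuffle_parts_have_L_word:
  fixes h :: "nat \<Rightarrow> nat"
  assumes "mono_on {1..m + n} h" "A \<subseteq> {1..m + n}" "card A = n"
    and "\<forall>k\<in>shuffle_set (m + n) A I J. h k < h (Suc k)" "I \<subseteq> {1..<m}" "J \<subseteq> {1..<n}"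
  shows "has_L_word m I (word_content ({1..m + n} - A) h)" "has_L_word n J (word_content A h)"
proof -
  let ?X = "{1..m + n} - A"
  have finA: "finite A" using assms(2) finite_subset by blast
  have cardX: "card ?X = m" using card_Diff_subset[OF finA assms(2)] assms(3) by simp
  have "\<forall>k\<in>I. h (kth_elem ?X k) < h (kth_elem ?X (Suc k))"
    using shuffle_ascent_complement[OF assms(2,1,4)] assms(5) cardX by force
  then show "has_L_word m I (word_content ?X h)"
    unfolding has_L_word_def using mono_on_kth_elem[of ?X] word_content_kth_elem[of ?X] assms(1) cardX
    by (metis Diff_subset finite_Diff finite_atLeastAtMost)
  have "\<forall>k\<in>J. h (kth_elem A k) < h (kth_elem A (Suc k))"
    using shuffle_ascent_second[OF assms(2,1,4)] assms(3,6) by force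
  then show "has_L_word n J (word_content A h)"
    unfolding has_L_word_def using mono_on_kth_elem[OF finA assms(2,1)] word_content_kth_elem[OF finA]
      assms(3) by metis
qed

lemma shuffle_subset_if_word_content_eq:
  fixes h :: "nat \<Rightarrow> nat"
  assumes "mono_on {1..N} h"
    and "A \<subseteq> {1..N}" "\<forall>k\<in>shuffle_set N A I J. h k < h (Suc k)"
    and "A' \<subseteq> {1..N}" "\<forall>k\<in>shuffle_set N A' I J. h k < h (Suc k)"
    and "word_content ({1..N} - A) h = word_content ({1..N} - A') h"
  shows "A \<subseteq> A'"
proof
  fix s assume "s \<in> A"
  show "s \<in> A'"
  proof (rule ccontr)
    assume "s \<notin> A'"
    define R where "R = {t\<in>{1..N}. h t = h s}"
    have "finite R" unfolding R_def by simp
    have "{t\<in>A'. h t = h s} \<subseteq> {t\<in>R. s < t}"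
    proof
      fix t assume t: "t \<in> {t\<in>A'. h t = h s}"
      have "s \<in> {1..N}" using \<open>s \<in> A\<close> assms(2) by auto
      then have "\<not> t \<le> s"
        using shuffle_block_tail_in[OF assms(4,1,5), of t s] t \<open>s \<notin> A'\<close> by auto
      then show "t \<in> {t\<in>R. s < t}" using t assms(4) unfolding R_def by auto
    qed
    then have "word_content A' h (h s) \<le> card {t\<in>R. s < t}"
      unfolding word_content_def using \<open>finite R\<close> by (intro card_mono) auto
    also have "\<dots> < card {t\<in>R. s \<le> t}"
    proof (rule psubset_card_mono)
      have "s \<in> {t\<in>R. s \<le> t} - {t\<in>R. s < t}" using \<open>s \<in> A\<close> assms(2) unfolding R_def by auto
      then show "{t\<in>R. s < t} \<subset> {t\<in>R. s \<le> t}" by auto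
    qed (use \<open>finite R\<close> in auto)
    also have "\<dots> \<le> word_content A h (h s)"
      using shuffle_block_tail_in[OF assms(2,1,3) \<open>s \<in> A\<close>] assms(2)
      unfolding R_def word_content_def by (intro card_mono) (auto intro: finite_subset)
    finally show False
      using word_content_complement[OF _ assms(2)] word_content_complement[OF _ assms(4)] assms(6)
      by (metis finite_atLeastAtMost less_irrefl)
  qed
qed

lemma card_eq_if_word_content_eq:
  fixes h f :: "nat \<Rightarrow> nat"
  assumes "finite X" "finite Y" "word_content X h = word_content Y f"
  shows "card X = card Y"
proof -
  define B where "B = Suc (sum h X + sum f Y)"
  have "h s < B" if "s \<in> X" for s
    using member_le_sum[OF that _ assms(1), of h] unfolding B_def by simp
  moreover have "f s < B" if "s \<in> Y" for s
    using member_le_sum[OF that _ assms(2), of f] unfolding B_def by simp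
  ultimately have "card X = card {s\<in>X. h s < B}" "card Y = card {s\<in>Y. f s < B}"
    by (auto intro: arg_cong[where f = card])
  then show ?thesis using card_less_eq_psum_word_content assms by metis
qed

lemma kth_elem_eq_mono_word:
  fixes h :: "nat \<Rightarrow> nat"
  assumes "mono_on {1..N} h" "finite X" "X \<subseteq> {1..N}" "card X = m"
    and "mono_on {1..m} f" "word_content {1..m} f = word_content X h" "k \<in> {1..m}"
  shows "h (kth_elem X k) = f k"
  using mono_words_eq[OF mono_on_kth_elem[OF assms(2,3,1)] , of f k] assms(4-7)
    word_content_kth_elem[OF assms(2)] by auto

lemma ascent_along_positions:
  fixes h :: "nat \<Rightarrow> nat"
  assumes "finite X" "k \<in> X" "Suc k \<in> X" "\<forall>j\<in>{1..card X}. h (kth_elem X j) = f j"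
    and "f (rank_in X k) < f (Suc (rank_in X k))"
  shows "h k < h (Suc k)"
proof -
  have "1 \<le> rank_in X k" "Suc (rank_in X k) \<le> card X"
    using rank_in_pos[OF assms(1,2)] rank_in_Suc[OF assms(1), of k] assms(3)
      rank_in_le_card[OF assms(1), of "Suc k"] by auto
  then have "h (kth_elem X (rank_in X k)) = f (rank_in X k)"
    "h (kth_elem X (Suc (rank_in X k))) = f (Suc (rank_in X k))"
    using assms(4) by auto
  then show ?thesis
    using assms(5) kth_elem_rank_in[OF assms(1,2)] kth_elem_Suc_rank_in[OF assms(1-3)] by simp
qed

text \<open>The inverse of the splitting: in each block of equal letters of \<open>h\<close>, the first \<open>e\<^sub>1 i\<close>
  positions go to the first word and the others to the second.\<close>

definition split_positions :: "nat \<Rightarrow> (nat \<Rightarrow> nat) \<Rightarrow> (nat \<Rightarrow> nat) \<Rightarrow> (nat \<Rightarrow> nat) \<Rightarrow> nat set" where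
  "split_positions N e e1 h = {s\<in>{1..N}. psum e (h s) + e1 (h s) < s}"

lemma word_content_split_positions:
  fixes h :: "nat \<Rightarrow> nat"
  assumes "mono_on {1..N} h" "word_content {1..N} h = e" "\<forall>i. e1 i \<le> e i"
  shows "word_content ({1..N} - split_positions N e e1 h) h = e1"
proof
  fix i
  let ?X = "{1..N} - split_positions N e e1 h"
  have block: "h s = i \<longleftrightarrow> psum e i < s \<and> s \<le> psum e (Suc i)" if "s \<in> {1..N}" for s
    using mono_word_eq_iff[OF assms(1)] that assms(2) by auto
  obtain B where "supported_below e B" "psum e B = N"
    using word_content_total[of N h] assms(2) by blast
  then have "psum e (Suc i) \<le> N" using psum_le_if_supported_below by metis
  moreover have "psum e i + e1 i \<le> psum e (Suc i)"
    using assms(3) by (simp add: psum_Suc)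
  ultimately have "{s\<in>?X. h s = i} = {psum e i<..psum e i + e1 i}"
  proof (intro set_eqI iffI)
    fix s assume "s \<in> {s\<in>?X. h s = i}"
    then show "s \<in> {psum e i<..psum e i + e1 i}" using block[of s] by (auto simp: split_positions_def)
  next
    fix s assume s: "s \<in> {psum e i<..psum e i + e1 i}"
    then have "s \<in> {1..N}" using \<open>psum e i + e1 i \<le> psum e (Suc i)\<close> \<open>psum e (Suc i) \<le> N\<close> by auto
    then have "h s = i" using block[of s] s \<open>psum e i + e1 i \<le> psum e (Suc i)\<close> by auto
    then show "s \<in> {s\<in>?X. h s = i}"
      using s \<open>s \<in> {1..N}\<close> by (auto simp: split_positions_def)
  qed
  then show "word_content ?X h i = e1 i" unfolding word_content_def by simp
qed

lemma shuffle_exists: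
  fixes h :: "nat \<Rightarrow> nat"
  assumes h: "mono_on {1..m + n} h" "word_content {1..m + n} h = e"
    and e1: "has_L_word m I e1" "has_L_word n J (\<lambda>i. e i - e1 i)" "\<forall>i. e1 i \<le> e i"
    and IJ: "I \<subseteq> {1..<m}" "J \<subseteq> {1..<n}"
  obtains A where "A \<subseteq> {1..m + n}" "card A = n" "\<forall>k\<in>shuffle_set (m + n) A I J. h k < h (Suc k)"
    "word_content ({1..m + n} - A) h = e1"
proof -
  define N where "N = m + n"
  define A where "A = split_positions N e e1 h"
  let ?X = "{1..N} - A"
  have AN: "A \<subseteq> {1..N}" and finA: "finite A" unfolding A_def split_positions_def by auto
  have cX: "word_content ?X h = e1"
    using word_content_split_positions[OF h[folded N_def] e1(3)] unfolding A_def .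
  have cA: "word_content A h = (\<lambda>i. e i - e1 i)"
    using word_content_complement[OF _ AN, of h] cX h(2) unfolding N_def by auto
  obtain f where f: "mono_on {1..m} f" "word_content {1..m} f = e1" "\<forall>k\<in>I. f k < f (Suc k)"
    using e1(1) unfolding has_L_word_def by blast
  obtain g where g: "mono_on {1..n} g" "word_content {1..n} g = (\<lambda>i. e i - e1 i)"
    "\<forall>k\<in>J. g k < g (Suc k)"
    using e1(2) unfolding has_L_word_def by blast
  have cardX: "card ?X = m"
    using card_eq_if_word_content_eq[of ?X "{1..m}" h f] cX f(2) by simp
  have cardA: "card A = n"
    using card_Diff_subset[OF finA AN] card_mono[OF _ AN] cardX unfolding N_def by simp
  have hX: "\<forall>k\<in>{1..card ?X}. h (kth_elem ?X k) = f k"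
    using kth_elem_eq_mono_word[of N h ?X m f] h(1) cardX f cX unfolding N_def by auto
  have "word_content {1..n} g = word_content A h" using g(2) cA by simp
  then have hA: "\<forall>k\<in>{1..card A}. h (kth_elem A k) = g k"
    using kth_elem_eq_mono_word[OF h(1)[folded N_def] finA AN cardA g(1)] cardA by auto
  have "h k < h (Suc k)" if k: "k \<in> shuffle_set N A I J" for k
  proof -
    have kN: "k \<in> {1..<N}" using k shuffle_set_subset by blast
    consider "k \<in> A" "Suc k \<notin> A" | "k \<notin> A" "Suc k \<notin> A" "rank_in ?X k \<in> I"
      | "k \<in> A" "Suc k \<in> A" "rank_in A k \<in> J"
      using k unfolding shuffle_set_def by blast
    then show ?thesis
    proof cases
      case 1
      moreover have "h k \<le> h (Suc k)" using mono_onD[OF h(1)] kN unfolding N_def by auto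
      ultimately show ?thesis
        using kN unfolding A_def split_positions_def by (cases "h k = h (Suc k)") auto
    next
      case 2
      then show ?thesis using ascent_along_positions[of ?X k h f] hX f(3) kN by auto
    next
      case 3
      then show ?thesis using ascent_along_positions[OF finA, of k h g] hA g(3) by auto
    qed
  qed
  then show ?thesis using that AN cardA cX unfolding N_def by blast
qed

lemma bij_betw_shuffles_splittings:
  fixes h :: "nat \<Rightarrow> nat"
  assumes "mono_on {1..m + n} h" "word_content {1..m + n} h = e" "I \<subseteq> {1..<m}" "J \<subseteq> {1..<n}"
  shows "bij_betw (\<lambda>A. word_content ({1..m + n} - A) h)
    {A. A \<subseteq> {1..m + n} \<and> card A = n \<and> (\<forall>k\<in>shuffle_set (m + n) A I J. h k < h (Suc k))}
    {e1. (\<forall>i. e1 i \<le> e i) \<and> has_L_word m I e1 \<and> has_L_word n J (\<lambda>i. e i - e1 i)}"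
    (is "bij_betw ?\<phi> ?S ?E")
proof (rule bij_betw_imageI)
  show "inj_on ?\<phi> ?S"
  proof (rule inj_onI)
    fix A A' assume "A \<in> ?S" "A' \<in> ?S" "?\<phi> A = ?\<phi> A'"
    then show "A = A'"
      using shuffle_subset_if_word_content_eq[OF assms(1), of A I J A']
        shuffle_subset_if_word_content_eq[OF assms(1), of A' I J A] by auto
  qed
  show "?\<phi> ` ?S = ?E"
  proof (intro equalityI subsetI)
    fix e1 assume "e1 \<in> ?\<phi> ` ?S"
    then obtain A where A: "A \<in> ?S" and e1: "e1 = ?\<phi> A" by blast
    have "(\<lambda>i. e i - e1 i) = word_content A h"
      using word_content_complement[of "{1..m + n}" A h] A assms(2) e1 by auto
    moreover have "e1 i \<le> e i" for i
      using word_content_mono[of "{1..m + n} - A" "{1..m + n}" h i] assms(2) e1 by auto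
    ultimately show "e1 \<in> ?E"
      using shuffle_parts_have_L_word[OF assms(1) _ _ _ assms(3,4), of A] A e1 by auto
  next
    fix e1 assume "e1 \<in> ?E"
    then obtain A where "A \<in> ?S" "?\<phi> A = e1"
      using shuffle_exists[OF assms(1,2) _ _ _ assms(3,4), of e1] by auto
    then show "e1 \<in> ?\<phi> ` ?S" by blast
  qed
qed

lemma mono_word_exists_add:
  assumes "has_L_word m I e1" "has_L_word n J e2"
  shows "\<exists>h. mono_on {1..m + n} h \<and> word_content {1..m + n} h = (\<lambda>i. e1 i + e2 i)"
proof -
  obtain f g where "word_content {1..m} f = e1" "word_content {1..n} g = e2"
    using assms unfolding has_L_word_def by blast
  then obtain B1 B2 where B: "supported_below e1 B1" "psum e1 B1 = m" "supported_below e2 B2" "psum e2 B2 = n"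
    using word_content_total[of m f] word_content_total[of n g] by metis
  let ?B = "max B1 B2"
  have "supported_below (\<lambda>i. e1 i + e2 i) ?B"
    using B(1,3) unfolding supported_below_def by simp
  moreover have "psum (\<lambda>i. e1 i + e2 i) ?B = m + n"
    using psum_eq_if_supported_below[OF B(1), of ?B] psum_eq_if_supported_below[OF B(3), of ?B] B(2,4)
    by (simp add: psum_add)
  ultimately show ?thesis by (rule mono_word_exists)
qed

lemma finite_pointwise_le:
  assumes "supported_below e B"
  shows "finite {e1. \<forall>i. e1 i \<le> e i}"
proof (rule finite_subset)
  show "{e1. \<forall>i. e1 i \<le> e i} \<subseteq> {f. \<forall>x. (x \<in> {..<B} \<longrightarrow> f x \<in> {..psum e B}) \<and> (x \<notin> {..<B} \<longrightarrow> f x = 0)}"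
  proof (intro subsetI CollectI allI conjI impI)
    fix e1 x assume e1: "e1 \<in> {e1. \<forall>i. e1 i \<le> e i}"
    show "e1 x \<in> {..psum e B}" if "x \<in> {..<B}"
    proof -
      have "e x \<le> psum e B" unfolding psum_def using that by (intro member_le_sum) auto
      moreover have "e1 x \<le> e x" using e1 by simp
      ultimately show ?thesis by simp
    qed
    show "e1 x = 0" if "x \<notin> {..<B}"
    proof -
      have "e x = 0" using assms that unfolding supported_below_def by simp
      then show ?thesis using e1 by (metis le_zero_eq mem_Collect_eq)
    qed
  qed
qed (rule finite_set_of_finite_funs; simp)

lemma sum_Lfun_shuffle_set:
  assumes "I \<subseteq> {1..<m}" "J \<subseteq> {1..<n}"
  shows "(\<Sum>A\<in>{A. A \<subseteq> {1..m + n} \<and> card A = n}. Lfun (m + n) (shuffle_set (m + n) A I J) e)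
    = qmult (Lfun m I) (Lfun n J) e"
proof -
  let ?S = "{A. A \<subseteq> {1..m + n} \<and> card A = n}"
  let ?E = "{e1. \<forall>i. e1 i \<le> e i}"
  have finS: "finite ?S" by (rule finite_subset[of _ "Pow {1..m + n}"]) auto
  have "(\<Sum>A\<in>?S. Lfun (m + n) (shuffle_set (m + n) A I J) e)
      = (\<Sum>A\<in>?S. of_bool (has_L_word (m + n) (shuffle_set (m + n) A I J) e))"
    using Lfun_eq_has_L_word[OF shuffle_set_subset] by simp
  moreover have "qmult (Lfun m I) (Lfun n J) e
      = (\<Sum>e1\<in>?E. of_bool (has_L_word m I e1 \<and> has_L_word n J (\<lambda>i. e i - e1 i)))"
    unfolding qmult_def using Lfun_eq_has_L_word[OF assms(1)] Lfun_eq_has_L_word[OF assms(2)]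
    by (simp add: of_bool_conj)
  moreover have "(\<Sum>A\<in>?S. of_bool (has_L_word (m + n) (shuffle_set (m + n) A I J) e))
      = (\<Sum>e1\<in>?E. of_bool (has_L_word m I e1 \<and> has_L_word n J (\<lambda>i. e i - e1 i)) :: complex)"
  proof (cases "\<exists>h. mono_on {1..m + n} h \<and> word_content {1..m + n} h = e")
    case True
    then obtain h where h: "mono_on {1..m + n} h" "word_content {1..m + n} h = e" by blast
    then obtain B where "supported_below e B" using word_content_total by metis
    then have finE: "finite ?E" by (rule finite_pointwise_le)
    have "(\<Sum>A\<in>?S. of_bool (has_L_word (m + n) (shuffle_set (m + n) A I J) e) :: complex)
        = of_nat (card {A. A \<subseteq> {1..m + n} \<and> card A = n
            \<and> (\<forall>k\<in>shuffle_set (m + n) A I J. h k < h (Suc k))})"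
      using has_L_word_iff_ascents[OF h shuffle_set_subset] finS
      by (simp add: Int_def conj_assoc)
    also have "\<dots> = of_nat (card {e1. (\<forall>i. e1 i \<le> e i) \<and> has_L_word m I e1
        \<and> has_L_word n J (\<lambda>i. e i - e1 i)})"
      using bij_betw_same_card[OF bij_betw_shuffles_splittings[OF h assms]] by simp
    also have "\<dots> = (\<Sum>e1\<in>?E. of_bool (has_L_word m I e1 \<and> has_L_word n J (\<lambda>i. e i - e1 i)))"
      using finE by (simp add: Int_def)
    finally show ?thesis .
  next
    case False
    then have "\<not> has_L_word (m + n) K e" for K unfolding has_L_word_def by blast
    moreover have "\<not> (has_L_word m I e1 \<and> has_L_word n J (\<lambda>i. e i - e1 i))" if "e1 \<in> ?E" for e1
      using mono_word_exists_add[of m I e1 n J "\<lambda>i. e i - e1 i"] that False by auto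
    ultimately show ?thesis by (simp add: sum.neutral)
  qed
  ultimately show ?thesis by simp
qed

lemma sum_image_count:
  fixes F :: "'b \<Rightarrow> 'c::semiring_1"
  assumes "finite S" "finite T" "f ` S \<subseteq> T"
  shows "(\<Sum>x\<in>S. F (f x)) = (\<Sum>y\<in>T. of_nat (card {x\<in>S. f x = y}) * F y)"
proof -
  have "(\<Sum>x\<in>S. F (f x)) = (\<Sum>y\<in>T. \<Sum>x\<in>{x\<in>S. f x = y}. F (f x))"
    using sum.group[OF assms, of "\<lambda>x. F (f x)"] by simp
  also have "\<dots> = (\<Sum>y\<in>T. of_nat (card {x\<in>S. f x = y}) * F y)"
    by (intro sum.cong) simp_all
  finally show ?thesis .
qed

lemma ch_mprod_chi_eq_qmult:
  assumes "1 < \<nu>" "I \<subseteq> {1..<m}" "J \<subseteq> {1..<n}"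
  shows "ch \<nu> (m + n) (mprod \<nu> m n (chi \<nu> m I) (chi \<nu> n J)) = qmult (Lfun m I) (Lfun n J)"
proof -
  let ?S = "{A. A \<subseteq> {1..m + n} \<and> card A = n}"
  let ?K = "\<lambda>A. shuffle_set (m + n) A I J"
  define c :: "nat set \<Rightarrow> complex" where "c K = of_nat (card {A\<in>?S. ?K A = K})" for K
  have finS: "finite ?S" by (rule finite_subset[of _ "Pow {1..m + n}"]) auto
  have K: "?K ` ?S \<subseteq> Pow {1..<m + n}" using shuffle_set_subset by blast
  have "mprod \<nu> m n (chi \<nu> m I) (chi \<nu> n J) g = (\<Sum>A\<in>?S. chi \<nu> (m + n) (?K A) g)" for g
    unfolding mprod_def using mA_chi assms(2,3) by (intro sum.cong) auto
  also have "\<dots> g = (\<Sum>K\<in>Pow {1..<m + n}. c K * chi \<nu> (m + n) K g)" for g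
    unfolding c_def by (rule sum_image_count[OF finS _ K]) simp
  finally have "ch \<nu> (m + n) (mprod \<nu> m n (chi \<nu> m I) (chi \<nu> n J))
      = (\<lambda>e. \<Sum>K\<in>Pow {1..<m + n}. c K * Lfun (m + n) K e)"
    using ch_eq[OF assms(1)] by blast
  also have "\<dots> = (\<lambda>e. \<Sum>A\<in>?S. Lfun (m + n) (?K A) e)"
    unfolding c_def by (rule ext, rule sum_image_count[OF finS _ K, symmetric]) simp
  also have "\<dots> = qmult (Lfun m I) (Lfun n J)"
    using sum_Lfun_shuffle_set[OF assms(2,3)] by (rule ext)
  finally show ?thesis .
qed

section \<open>The coproduct\<close>

definition lower_part :: "nat set \<Rightarrow> nat \<Rightarrow> nat set" where
  "lower_part I k = {s\<in>I. s < k}"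

definition upper_part :: "nat set \<Rightarrow> nat \<Rightarrow> nat set" where
  "upper_part I k = (\<lambda>s. s - k) ` {s\<in>I. k < s}"

lemma lower_part_subset: "I \<subseteq> {1..<n} \<Longrightarrow> lower_part I k \<subseteq> {1..<k}"
  unfolding lower_part_def by auto

lemma upper_part_subset:
  assumes "I \<subseteq> {1..<n}"
  shows "upper_part I k \<subseteq> {1..<n - k}"
proof
  fix j assume "j \<in> upper_part I k"
  then obtain s where "s \<in> I" "k < s" "j = s - k" unfolding upper_part_def by blast
  moreover have "s < n" using assms \<open>s \<in> I\<close> by auto
  ultimately show "j \<in> {1..<n - k}" by auto
qed

lemma mem_upper_part: "1 \<le> j \<Longrightarrow> j \<in> upper_part I k \<longleftrightarrow> j + k \<in> I"
  unfolding upper_part_def by (auto simp: image_iff intro: bexI[of _ "j + k"])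

lemma greaterThanLessThan_diff_eq_shift:
  "{k<..<n} - I = (\<lambda>j. j + k) ` ({1..<n - k} - upper_part I k)"
proof (intro equalityI subsetI)
  fix x assume x: "x \<in> {k<..<n} - I"
  then have "1 \<le> x - k" by auto
  then have "x - k \<in> {1..<n - k} - upper_part I k" using mem_upper_part[of "x - k" I k] x by auto
  moreover have "x = x - k + k" using x by simp
  ultimately show "x \<in> (\<lambda>j. j + k) ` ({1..<n - k} - upper_part I k)" by blast
next
  fix x assume "x \<in> (\<lambda>j. j + k) ` ({1..<n - k} - upper_part I k)"
  then obtain j where "j \<in> {1..<n - k}" "j \<notin> upper_part I k" "x = j + k" by blast
  then show "x \<in> {k<..<n} - I" using mem_upper_part[of j I k] by auto
qed

lemma cop_chi:
  assumes "k \<le> n" "I \<subseteq> {1..<n}"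
  shows "cop n k (chi \<nu> n I) a b = chi \<nu> k (lower_part I k) a * chi \<nu> (n - k) (upper_part I k) b"
proof -
  consider "k = 0" | "k = n" "k \<noteq> 0" | "0 < k" "k < n" using assms(1) by linarith
  then show ?thesis
  proof cases
    case 1
    have "upper_part I 0 = I" unfolding upper_part_def using assms(2) by force
    then show ?thesis using 1 unfolding cop_def by (simp add: chi_def)
  next
    case 2
    have "lower_part I n = I" unfolding lower_part_def using assms(2) by force
    then show ?thesis using 2 unfolding cop_def by (simp add: chi_def)
  next
    case 3
    define c where "c i = (if i < k then a i else if i = k then 0 else b (i - k))" for i
    let ?S1 = "{1..<k} - I" and ?S2 = "{k} - I" and ?S3 = "{k<..<n} - I"
    have "{1..<n} - I = ?S1 \<union> ?S2 \<union> ?S3" using 3 by auto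
    moreover have "?S1 \<inter> ?S2 = {}" "(?S1 \<union> ?S2) \<inter> ?S3 = {}" by auto
    ultimately have "chi \<nu> n I c = (\<Prod>i\<in>?S1. psi \<nu> (c i)) * (\<Prod>i\<in>?S2. psi \<nu> (c i)) * (\<Prod>i\<in>?S3. psi \<nu> (c i))"
      unfolding chi_def by (simp add: prod.union_disjoint)
    also have "(\<Prod>i\<in>?S1. psi \<nu> (c i)) = chi \<nu> k (lower_part I k) a"
    proof -
      have "{1..<k} - lower_part I k = ?S1" unfolding lower_part_def by auto
      then show ?thesis unfolding chi_def by (intro prod.cong) (auto simp: c_def)
    qed
    also have "(\<Prod>i\<in>?S2. psi \<nu> (c i)) = 1"
      by (rule prod.neutral) (auto simp: c_def psi_def)
    also have "(\<Prod>i\<in>?S3. psi \<nu> (c i)) = chi \<nu> (n - k) (upper_part I k) b"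
      unfolding greaterThanLessThan_diff_eq_shift chi_def
      by (subst prod.reindex) (auto simp: inj_on_def c_def intro!: prod.cong)
    finally show ?thesis using 3 unfolding cop_def c_def by simp
  qed
qed

lemma ch2_cop_chi:
  assumes "1 < \<nu>" "k \<le> n" "I \<subseteq> {1..<n}"
  shows "ch2 \<nu> k (n - k) (cop n k (chi \<nu> n I)) = tens (Lfun k (lower_part I k)) (Lfun (n - k) (upper_part I k))"
proof -
  let ?I1 = "lower_part I k" and ?I2 = "upper_part I k"
  define c :: "nat set \<Rightarrow> nat set \<Rightarrow> complex" where "c I' J' = of_bool (I' = ?I1 \<and> J' = ?I2)" for I' J'
  have pick: "(\<Sum>I'\<in>Pow {1..<k}. \<Sum>J'\<in>Pow {1..<n - k}. c I' J' * X I' J') = X ?I1 ?I2" for X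
    using lower_part_subset[OF assms(3)] upper_part_subset[OF assms(3)]
    by (simp add: c_def of_bool_conj mult.assoc if_distrib sum.delta cong: if_cong)
  have "\<forall>a\<in>Qn \<nu> k. \<forall>b\<in>Qn \<nu> (n - k). cop n k (chi \<nu> n I) a b =
      (\<Sum>I'\<in>Pow {1..<k}. \<Sum>J'\<in>Pow {1..<n - k}. c I' J' * (chi \<nu> k I' a * chi \<nu> (n - k) J' b))"
    using pick cop_chi[OF assms(2,3)] by simp
  then have "ch2 \<nu> k (n - k) (cop n k (chi \<nu> n I))
      = (\<lambda>p. \<Sum>I'\<in>Pow {1..<k}. \<Sum>J'\<in>Pow {1..<n - k}. c I' J' * tens (Lfun k I') (Lfun (n - k) J') p)"
    by (rule ch2_eq[OF assms(1)])
  also have "\<dots> = tens (Lfun k ?I1) (Lfun (n - k) ?I2)"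
    by (intro ext) (rule pick)
  finally show ?thesis .
qed

definition comp_monomial :: "nat list \<Rightarrow> nat \<Rightarrow> nat" where
  "comp_monomial \<alpha> i = (if i < length \<alpha> then \<alpha> ! i else 0)"

lemma flat_comp_monomial:
  assumes "is_comp \<alpha>"
  shows "finite (supp (comp_monomial \<alpha>))" "flat (comp_monomial \<alpha>) = \<alpha>"
proof -
  have supp: "supp (comp_monomial \<alpha>) = {0..<length \<alpha>}"
    using assms unfolding supp_def comp_monomial_def is_comp_def by (auto simp: nth_mem)
  then show "finite (supp (comp_monomial \<alpha>))" by simp
  have "flat (comp_monomial \<alpha>) = map (\<lambda>i. \<alpha> ! i) [0..<length \<alpha>]"
    unfolding flat_def supp by (simp add: comp_monomial_def)
  then show "flat (comp_monomial \<alpha>) = \<alpha>" by (simp add: map_nth)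
qed

text \<open>The \<open>M\<^sub>\<alpha>\<close> are linearly independent, so the linear extension \<^const>\<open>qcoprod\<close> is well defined.\<close>

lemma qcoprod_eq:
  assumes "finite A" "\<forall>\<alpha>\<in>A. is_comp \<alpha>"
  shows "qcoprod (\<lambda>e. \<Sum>\<alpha>\<in>A. c \<alpha> * M \<alpha> e) = (\<lambda>p. \<Sum>\<alpha>\<in>A. c \<alpha> * coprodM \<alpha> p)"
  unfolding qcoprod_def
proof (rule the_equality)
  fix t assume "\<exists>A' c'. finite A' \<and> (\<forall>\<alpha>\<in>A'. is_comp \<alpha>) \<and>
      (\<lambda>e. \<Sum>\<alpha>\<in>A. c \<alpha> * M \<alpha> e) = (\<lambda>e. \<Sum>\<alpha>\<in>A'. c' \<alpha> * M \<alpha> e) \<and>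
      t = (\<lambda>p. \<Sum>\<alpha>\<in>A'. c' \<alpha> * coprodM \<alpha> p)"
  then obtain A' c' where A': "finite A'" "\<forall>\<alpha>\<in>A'. is_comp \<alpha>"
    and eq: "(\<lambda>e. \<Sum>\<alpha>\<in>A. c \<alpha> * M \<alpha> e) = (\<lambda>e. \<Sum>\<alpha>\<in>A'. c' \<alpha> * M \<alpha> e)"
    and t: "t = (\<lambda>p. \<Sum>\<alpha>\<in>A'. c' \<alpha> * coprodM \<alpha> p)" by blast
  have coeff: "(\<Sum>\<beta>\<in>B. d \<beta> * M \<beta> (comp_monomial \<alpha>)) = (if \<alpha> \<in> B then d \<alpha> else 0)"
    if "finite B" "\<forall>\<beta>\<in>B. is_comp \<beta>" "is_comp \<alpha>" for B d \<alpha>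
    using that flat_comp_monomial[of \<alpha>] by (simp add: M_eq sum.delta' cong: sum.cong)
  define d where "d \<alpha> = (if \<alpha> \<in> A then c \<alpha> else 0)" for \<alpha>
  have d: "d \<alpha> = (if \<alpha> \<in> A' then c' \<alpha> else 0)" if "\<alpha> \<in> A \<union> A'" for \<alpha>
    using fun_cong[OF eq, of "comp_monomial \<alpha>"] coeff[OF assms, of \<alpha> c] coeff[OF A', of \<alpha> c'] that
      assms(2) A'(2) unfolding d_def by auto
  have "(\<Sum>\<alpha>\<in>A. c \<alpha> * coprodM \<alpha> p) = (\<Sum>\<alpha>\<in>A'. c' \<alpha> * coprodM \<alpha> p)" for p
  proof -
    have "(\<Sum>\<alpha>\<in>A. c \<alpha> * coprodM \<alpha> p) = (\<Sum>\<alpha>\<in>A \<union> A'. d \<alpha> * coprodM \<alpha> p)"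
      by (rule sum.mono_neutral_cong_left) (use assms(1) A'(1) in \<open>auto simp: d_def\<close>)
    also have "\<dots> = (\<Sum>\<alpha>\<in>A'. c' \<alpha> * coprodM \<alpha> p)"
      by (rule sum.mono_neutral_cong_right) (use assms(1) A'(1) d in auto)
    finally show ?thesis .
  qed
  then show "t = (\<lambda>p. \<Sum>\<alpha>\<in>A. c \<alpha> * coprodM \<alpha> p)" unfolding t by simp
qed (use assms in blast)

lemma coprodM_eq:
  assumes "is_comp \<alpha>"
  shows "coprodM \<alpha> (e1, e2) = of_bool (finite (supp e1) \<and> finite (supp e2) \<and> \<alpha> = flat e1 @ flat e2)"
proof -
  have "coprodM \<alpha> (e1, e2) = (\<Sum>j\<le>length \<alpha>. of_bool (finite (supp e1) \<and> finite (supp e2)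
      \<and> take j \<alpha> = flat e1 \<and> drop j \<alpha> = flat e2))"
    unfolding coprodM_def tens_def
    by (intro sum.cong refl)
      (simp add: M_eq[OF is_comp_take[OF assms]] M_eq[OF is_comp_drop[OF assms]] of_bool_conj)
  also have "\<dots> = (\<Sum>j\<le>length \<alpha>. of_bool (j = length (flat e1) \<and> finite (supp e1) \<and> finite (supp e2)
      \<and> \<alpha> = flat e1 @ flat e2))"
  proof (intro sum.cong refl arg_cong[where f = of_bool])
    fix j assume "j \<in> {..length \<alpha>}"
    then have "length (take j \<alpha>) = j" by simp
    then show "(finite (supp e1) \<and> finite (supp e2) \<and> take j \<alpha> = flat e1 \<and> drop j \<alpha> = flat e2) \<longleftrightarrow>
      (j = length (flat e1) \<and> finite (supp e1) \<and> finite (supp e2) \<and> \<alpha> = flat e1 @ flat e2)"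
      by (metis append_eq_conv_conj append_take_drop_id)
  qed
  also have "\<dots> = of_bool (finite (supp e1) \<and> finite (supp e2) \<and> \<alpha> = flat e1 @ flat e2)"
    by (auto simp: sum.delta)
  finally show ?thesis .
qed

lemma qcoprod_Lfun:
  assumes "I \<subseteq> {1..<n}"
  shows "qcoprod (Lfun n I) (e1, e2) = of_bool (finite (supp e1) \<and> finite (supp e2)
    \<and> sum_list (flat e1 @ flat e2) = n \<and> I \<subseteq> partial_sums (flat e1 @ flat e2))"
proof -
  let ?S = "{J. I \<subseteq> J \<and> J \<subseteq> {1..<n}}"
  have finS: "finite ?S" by (rule finite_subset[of _ "Pow {1..<n}"]) auto
  have inj: "inj_on (comp n) ?S" by (rule inj_onI) (use comp_inj in blast)
  have "Lfun n I = (\<lambda>e. \<Sum>\<alpha>\<in>comp n ` ?S. 1 * M \<alpha> e)"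
    unfolding Lfun_def by (subst sum.reindex[OF inj]) simp
  then have "qcoprod (Lfun n I) = (\<lambda>p. \<Sum>\<alpha>\<in>comp n ` ?S. 1 * coprodM \<alpha> p)"
    using qcoprod_eq[of "comp n ` ?S" "\<lambda>_. 1"] finS is_comp_comp by auto
  then have "qcoprod (Lfun n I) (e1, e2) = (\<Sum>J\<in>?S. coprodM (comp n J) (e1, e2))"
    by (subst (asm) sum.reindex[OF inj]) simp
  also have "\<dots> = (\<Sum>J\<in>?S. of_bool (finite (supp e1) \<and> finite (supp e2))
      * of_bool (comp n J = flat e1 @ flat e2))"
    using coprodM_eq is_comp_comp by (intro sum.cong) auto
  also have "\<dots> = of_bool (finite (supp e1) \<and> finite (supp e2))
      * of_bool (sum_list (flat e1 @ flat e2) = n \<and> I \<subseteq> partial_sums (flat e1 @ flat e2))"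
    unfolding sum_distrib_left[symmetric]
      sum_supersets_comp_eq[OF assms is_comp_append[OF is_comp_flat is_comp_flat]] ..
  finally show ?thesis by simp
qed

lemma partial_sums_append:
  "partial_sums (\<beta> @ \<gamma>) = partial_sums \<beta> \<union> (\<lambda>x. sum_list \<beta> + x) ` partial_sums \<gamma>"
proof (intro equalityI subsetI)
  fix x assume "x \<in> partial_sums (\<beta> @ \<gamma>)"
  then obtain c where c: "c \<le> length (\<beta> @ \<gamma>)" "x = sum_list (take c (\<beta> @ \<gamma>))"
    unfolding partial_sums_def by blast
  show "x \<in> partial_sums \<beta> \<union> (\<lambda>x. sum_list \<beta> + x) ` partial_sums \<gamma>"
  proof (cases "c \<le> length \<beta>")
    case True
    then show ?thesis using c unfolding partial_sums_def by auto
  next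
    case False
    then have "x = sum_list \<beta> + sum_list (take (c - length \<beta>) \<gamma>)" "c - length \<beta> \<le> length \<gamma>"
      using c by auto
    then show ?thesis unfolding partial_sums_def by blast
  qed
next
  fix x assume "x \<in> partial_sums \<beta> \<union> (\<lambda>x. sum_list \<beta> + x) ` partial_sums \<gamma>"
  then consider c where "c \<le> length \<beta>" "x = sum_list (take c \<beta>)"
    | c where "c \<le> length \<gamma>" "x = sum_list \<beta> + sum_list (take c \<gamma>)"
    unfolding partial_sums_def by blast
  then show "x \<in> partial_sums (\<beta> @ \<gamma>)"
  proof cases
    case (1 c)
    then show ?thesis unfolding partial_sums_def by (auto intro!: exI[of _ c])
  next
    case (2 c)
    then show ?thesis unfolding partial_sums_def by (auto intro!: exI[of _ "length \<beta> + c"])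
  qed
qed

lemma partial_sums_le: "x \<in> partial_sums \<beta> \<Longrightarrow> x \<le> sum_list \<beta>"
proof -
  assume "x \<in> partial_sums \<beta>"
  then obtain c where "x = sum_list (take c \<beta>)" unfolding partial_sums_def by blast
  moreover have "sum_list \<beta> = sum_list (take c \<beta>) + sum_list (drop c \<beta>)"
    by (metis append_take_drop_id sum_list_append)
  ultimately show ?thesis by simp
qed

lemma subset_partial_sums_append_iff:
  "I \<subseteq> partial_sums (\<beta> @ \<gamma>) \<longleftrightarrow>
    lower_part I (sum_list \<beta>) \<subseteq> partial_sums \<beta> \<and> upper_part I (sum_list \<beta>) \<subseteq> partial_sums \<gamma>"
  (is "_ \<longleftrightarrow> ?lower \<and> ?upper")
proof
  assume I: "I \<subseteq> partial_sums (\<beta> @ \<gamma>)"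
  show "?lower \<and> ?upper"
  proof
    show ?lower
      using I partial_sums_le unfolding lower_part_def partial_sums_append by fastforce
    show ?upper
    proof
      fix j assume "j \<in> upper_part I (sum_list \<beta>)"
      then obtain s where s: "s \<in> I" "sum_list \<beta> < s" "j = s - sum_list \<beta>"
        unfolding upper_part_def by blast
      then have "s \<notin> partial_sums \<beta>" using partial_sums_le[of s \<beta>] by auto
      then obtain y where "y \<in> partial_sums \<gamma>" "s = sum_list \<beta> + y"
        using I s(1) unfolding partial_sums_append by auto
      then show "j \<in> partial_sums \<gamma>" using s(3) by simp
    qed
  qed
next
  assume parts: "?lower \<and> ?upper"
  show "I \<subseteq> partial_sums (\<beta> @ \<gamma>)"
  proof
    fix s assume s: "s \<in> I"
    consider "s < sum_list \<beta>" | "s = sum_list \<beta>" | "sum_list \<beta> < s" by linarith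
    then show "s \<in> partial_sums (\<beta> @ \<gamma>)"
    proof cases
      case 1
      then show ?thesis using s parts unfolding lower_part_def partial_sums_append by auto
    next
      case 2
      then show ?thesis unfolding partial_sums_append partial_sums_def
        by (auto intro!: exI[of _ "length \<beta>"])
    next
      case 3
      then have "s - sum_list \<beta> \<in> partial_sums \<gamma>"
        using s parts unfolding upper_part_def by auto
      moreover have "s = sum_list \<beta> + (s - sum_list \<beta>)" using 3 by simp
      ultimately show ?thesis unfolding partial_sums_append by blast
    qed
  qed
qed

lemma ch2_cop_chi_eq_qcoprod:
  assumes "1 < \<nu>" "I \<subseteq> {1..<n}"
  shows "(\<lambda>p. \<Sum>k\<le>n. ch2 \<nu> k (n - k) (cop n k (chi \<nu> n I)) p) = qcoprod (Lfun n I)"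
proof (rule ext, unfold split_paired_all)
  fix e1 e2 :: "nat \<Rightarrow> nat"
  let ?P = "finite (supp e1) \<and> finite (supp e2) \<and> sum_list (flat e1 @ flat e2) = n
    \<and> I \<subseteq> partial_sums (flat e1 @ flat e2)"
  have "ch2 \<nu> k (n - k) (cop n k (chi \<nu> n I)) (e1, e2) = of_bool (k = sum_list (flat e1) \<and> ?P)"
    if "k \<le> n" for k
  proof -
    have "ch2 \<nu> k (n - k) (cop n k (chi \<nu> n I)) (e1, e2)
        = Lfun k (lower_part I k) e1 * Lfun (n - k) (upper_part I k) e2"
      using ch2_cop_chi[OF assms(1) that assms(2)] by (simp add: tens_def)
    also have "\<dots> = of_bool (k = sum_list (flat e1) \<and> ?P)"
      using Lfun_eq[OF lower_part_subset[OF assms(2)]] Lfun_eq[OF upper_part_subset[OF assms(2)]] that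
        subset_partial_sums_append_iff[of I "flat e1" "flat e2"]
      by (auto simp: of_bool_conj[symmetric])
    finally show ?thesis .
  qed
  then have "(\<Sum>k\<le>n. ch2 \<nu> k (n - k) (cop n k (chi \<nu> n I)) (e1, e2))
      = (\<Sum>k\<le>n. if k = sum_list (flat e1) then of_bool ?P else 0)"
    by (intro sum.cong) auto
  also have "\<dots> = of_bool ?P"
    by (simp add: sum.delta)
  finally have "(\<Sum>k\<le>n. ch2 \<nu> k (n - k) (cop n k (chi \<nu> n I)) (e1, e2)) = of_bool ?P" .
  then show "(\<Sum>k\<le>n. ch2 \<nu> k (n - k) (cop n k (chi \<nu> n I)) (e1, e2)) = qcoprod (Lfun n I) (e1, e2)"
    using qcoprod_Lfun[OF assms(2)] by simp
qed

theorem lemma3p10: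
  fixes \<nu> m n :: nat
  assumes "\<nu> > 1"
  shows "(\<forall>I J. I \<subseteq> {1..<m} \<and> J \<subseteq> {1..<n} \<longrightarrow>
            ch \<nu> (m + n) (mprod \<nu> m n (chi \<nu> m I) (chi \<nu> n J)) = qmult (Lfun m I) (Lfun n J))
       \<and> (\<forall>I. I \<subseteq> {1..<n} \<longrightarrow>
            (\<lambda>p. \<Sum>k\<le>n. ch2 \<nu> k (n - k) (cop n k (chi \<nu> n I)) p) = qcoprod (Lfun n I))"
  using ch_mprod_chi_eq_qmult[OF assms] ch2_cop_chi_eq_qcoprod[OF assms] by blast

end
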